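(* Let $\beta>0$, $T>0$, let $V:\mathbb{R}^d\to\mathbb{R}$ be smooth with $\pi=e^{-V}$ a probability density, and let $L:=\Delta-\langle\nabla V,\nabla\cdot\rangle$. Let $\mu_1,\mu_2\geq0$ be two classical solutions of $\partial_t\mu=L\mu^{\beta+1}$ on $\mathbb{R}^d\times[0,T]$ such that $\int_0^T\int_{\mathbb{R}^d}\|\nabla\mu_i^{1+\beta}\|^2\,d\pi\,dt<\infty$ for $i=1,2$. Then $t\mapsto\|\mu_1(t)-\mu_2(t)\|_{L^1(\mathbb{R}^d,\pi)}$ is non-increasing; consequently, classical solutions of the Cauchy problem with given initial data satisfying this condition are unique.
   Context: $L^1(\mathbb{R}^d,\pi)$ is $L^1$ with respect to the measure $\pi(x)\,dx$. *)

theory Defs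
  imports "HOL-Analysis.Analysis"
begin

definition pdiff :: "('a::euclidean_space \<Rightarrow> real) \<Rightarrow> 'a \<Rightarrow> 'a \<Rightarrow> real" where
  "pdiff f b x = frechet_derivative f (at x) b"

fun Ck :: "nat \<Rightarrow> ('a::euclidean_space \<Rightarrow> real) \<Rightarrow> bool" where
  "Ck 0 f = continuous_on UNIV f"
| "Ck (Suc k) f = (f differentiable_on UNIV \<and> (\<forall>b\<in>Basis. Ck k (pdiff f b)))"

definition smooth :: "('a::euclidean_space \<Rightarrow> real) \<Rightarrow> bool" where
  "smooth f \<longleftrightarrow> (\<forall>k. Ck k f)"

definition grad :: "('a::euclidean_space \<Rightarrow> real) \<Rightarrow> 'a \<Rightarrow> 'a" where
  "grad f x = (\<Sum>b\<in>Basis. pdiff f b x *\<^sub>R b)"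

definition laplacian :: "('a::euclidean_space \<Rightarrow> real) \<Rightarrow> 'a \<Rightarrow> real" where
  "laplacian f x = (\<Sum>b\<in>Basis. pdiff (pdiff f b) b x)"

definition genL :: "('a::euclidean_space \<Rightarrow> real) \<Rightarrow> ('a \<Rightarrow> real) \<Rightarrow> 'a \<Rightarrow> real" where
  "genL V f x = laplacian f x - grad V x \<bullet> grad f x"

definition classical_solution ::
  "('a::euclidean_space \<Rightarrow> real) \<Rightarrow> real \<Rightarrow> real \<Rightarrow> (real \<Rightarrow> 'a \<Rightarrow> real) \<Rightarrow> bool" where
  "classical_solution V \<beta> T \<mu> \<longleftrightarrow>
     (\<forall>t\<in>{0..T}. \<forall>x. \<mu> t x \<ge> 0) \<and>
     continuous_on ({0..T} \<times> UNIV) (\<lambda>(t,x). \<mu> t x) \<and>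
     (\<forall>t\<in>{0..T}. Ck 2 (\<lambda>x. \<mu> t x powr (\<beta> + 1))) \<and>
     (\<forall>b\<in>Basis. continuous_on ({0..T} \<times> UNIV)
         (\<lambda>(t,x). pdiff (\<lambda>y. \<mu> t y powr (\<beta> + 1)) b x)) \<and>
     (\<forall>b\<in>Basis. \<forall>c\<in>Basis. continuous_on ({0..T} \<times> UNIV)
         (\<lambda>(t,x). pdiff (pdiff (\<lambda>y. \<mu> t y powr (\<beta> + 1)) b) c x)) \<and>
     (\<forall>x. \<forall>t\<in>{0..T}. ((\<lambda>s. \<mu> s x) has_real_derivative
         genL V (\<lambda>y. \<mu> t y powr (\<beta> + 1)) x) (at t within {0..T}))"

definition L1pi_dist :: "('a::euclidean_space \<Rightarrow> real) \<Rightarrow> ('a \<Rightarrow> real) \<Rightarrow> ('a \<Rightarrow> real) \<Rightarrow> ennreal" where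
  "L1pi_dist V f g = (\<integral>\<^sup>+ x. ennreal (\<bar>f x - g x\<bar> * exp (- V x)) \<partial>lborel)"

end

theory Submission
  imports Defs
begin

(* Write u = mu1 - mu2 and w = mu1^(beta+1) - mu2^(beta+1). Then d/dt u = L w, and sgn u = sgn w
   because r |-> r^(beta+1) is increasing on [0, oo). For the cutoff
   psi_R(x) = max(0, 1 - |x|^2/R^2)^2, whose gradient is bounded by 4/R, Kato's inequality
     int sgn(w) psi_R L w dpi <= int |grad psi_R| |grad w| dpi
   follows by integrating by parts (L is symmetric with respect to pi = e^-V) against the
   regularised sign w / sqrt(e + w^2) and letting e -> 0. Therefore
     int psi_R |u(t)| dpi <= int psi_R |u(s)| dpi + (4/R) (T + 2 E1 + 2 E2),
   where E1, E2 are the energies int_0^T int |grad mu_i^(beta+1)|^2 dpi dt, finite by hypothesis.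
   Letting R -> oo with monotone convergence shows that the L^1(pi) distance is non-increasing;
   uniqueness follows since a continuous function with zero L^1(pi) norm vanishes. *)

section \<open>Partial derivatives, gradient and the generator\<close>

lemma grad_inner_Basis: "b \<in> Basis \<Longrightarrow> grad f x \<bullet> b = pdiff f b x"
  by (simp add: grad_def inner_sum_left inner_Basis if_distrib sum.delta cong: if_cong)

lemma has_derivative_grad:
  assumes "f differentiable (at x)"
  shows "(f has_derivative (\<lambda>h. grad f x \<bullet> h)) (at x)"
proof -
  have f': "(f has_derivative frechet_derivative f (at x)) (at x)"
    using assms frechet_derivative_works by blast
  have "frechet_derivative f (at x) h = grad f x \<bullet> h" for h
  proof -
    have "frechet_derivative f (at x) h = frechet_derivative f (at x) (\<Sum>b\<in>Basis. (h \<bullet> b) *\<^sub>R b)"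
      by (simp add: euclidean_representation)
    also have "\<dots> = (\<Sum>b\<in>Basis. (h \<bullet> b) * frechet_derivative f (at x) b)"
      using has_derivative_linear[OF f'] by (simp add: linear_sum linear_scale)
    also have "\<dots> = grad f x \<bullet> h"
      by (simp add: grad_def pdiff_def inner_sum_right mult.commute inner_commute)
    finally show ?thesis .
  qed
  with f' show ?thesis by (metis (no_types, lifting) ext)
qed

lemma pdiff_diff:
  assumes "f differentiable (at x)" "g differentiable (at x)"
  shows "pdiff (\<lambda>x. f x - g x) b x = pdiff f b x - pdiff g b x"
proof -
  have "((\<lambda>x. f x - g x) has_derivative (\<lambda>h. frechet_derivative f (at x) h - frechet_derivative g (at x) h)) (at x)"
    using assms by (intro has_derivative_diff) (simp_all add: frechet_derivative_works)
  then show ?thesis by (simp add: pdiff_def frechet_derivative_at[symmetric])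
qed

lemma Ck_diff: "Ck k f \<Longrightarrow> Ck k g \<Longrightarrow> Ck k (\<lambda>x. f x - g x)"
proof (induction k arbitrary: f g)
  case 0
  then show ?case by (simp add: continuous_on_diff)
next
  case (Suc k)
  then have "f differentiable_on UNIV" "g differentiable_on UNIV" by simp_all
  then have "pdiff (\<lambda>x. f x - g x) b = (\<lambda>x. pdiff f b x - pdiff g b x)" for b
    by (intro ext) (simp add: pdiff_diff differentiable_on_def)
  with Suc show ?case by (simp add: differentiable_on_diff)
qed

lemma
  assumes "Ck 2 f"
  shows Ck2_differentiable: "f differentiable (at x)"
    and Ck2_continuous: "continuous_on UNIV f"
    and Ck2_pdiff_differentiable: "b \<in> Basis \<Longrightarrow> pdiff f b differentiable (at x)"
    and Ck2_pdiff_continuous: "b \<in> Basis \<Longrightarrow> continuous_on UNIV (pdiff f b)"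
    and Ck2_pdiff_pdiff_continuous:
      "b \<in> Basis \<Longrightarrow> c \<in> Basis \<Longrightarrow> continuous_on UNIV (pdiff (pdiff f b) c)"
proof -
  have f: "f differentiable_on UNIV" "\<And>b. b \<in> Basis \<Longrightarrow> pdiff f b differentiable_on UNIV"
    "\<And>b c. b \<in> Basis \<Longrightarrow> c \<in> Basis \<Longrightarrow> continuous_on UNIV (pdiff (pdiff f b) c)"
    using assms by (simp_all add: numeral_2_eq_2)
  then show "f differentiable (at x)" "b \<in> Basis \<Longrightarrow> pdiff f b differentiable (at x)"
    by (simp_all add: differentiable_on_def)
  show "continuous_on UNIV f" "b \<in> Basis \<Longrightarrow> continuous_on UNIV (pdiff f b)"
    using f differentiable_imp_continuous_on by blast+
  show "b \<in> Basis \<Longrightarrow> c \<in> Basis \<Longrightarrow> continuous_on UNIV (pdiff (pdiff f b) c)"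
    by (rule f(3))
qed

lemma grad_diff:
  assumes "f differentiable (at x)" "g differentiable (at x)"
  shows "grad (\<lambda>x. f x - g x) x = grad f x - grad g x"
  using assms by (simp add: grad_def pdiff_diff scaleR_diff_left sum_subtractf)

lemma genL_diff:
  assumes "Ck 2 f" "Ck 2 g"
  shows "genL V (\<lambda>x. f x - g x) x = genL V f x - genL V g x"
proof -
  have "pdiff (\<lambda>x. f x - g x) b = (\<lambda>x. pdiff f b x - pdiff g b x)" for b
    using assms by (intro ext) (simp add: pdiff_diff Ck2_differentiable)
  then have "laplacian (\<lambda>x. f x - g x) x = laplacian f x - laplacian g x"
    using assms by (simp add: laplacian_def pdiff_diff Ck2_pdiff_differentiable sum_subtractf)
  then show ?thesis
    using assms by (simp add: genL_def grad_diff Ck2_differentiable inner_diff_right)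
qed

lemma continuous_on_grad: "Ck 2 f \<Longrightarrow> continuous_on UNIV (grad f)"
  unfolding grad_def by (intro continuous_intros) (simp add: Ck2_pdiff_continuous)

lemma continuous_on_genL: "Ck 2 f \<Longrightarrow> Ck 2 V \<Longrightarrow> continuous_on UNIV (genL V f)"
  unfolding genL_def[abs_def] laplacian_def
  by (intro continuous_intros continuous_on_grad) (simp_all add: Ck2_pdiff_pdiff_continuous)

section \<open>Integrals of functions with bounded support\<close>

definition cube :: "real \<Rightarrow> 'a::euclidean_space set" where
  "cube r = cbox (- (r *\<^sub>R One)) (r *\<^sub>R One)"

lemma integrable_continuous_cube:
  fixes f :: "'a::euclidean_space \<Rightarrow> 'b::euclidean_space"
  shows "continuous_on UNIV f \<Longrightarrow> f integrable_on cube r"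
  unfolding cube_def by (rule integrable_continuous) (rule continuous_on_subset, auto)

lemma norm_gt_if_notin_cube: "x \<notin> cube r \<Longrightarrow> r < norm x"
proof -
  assume "x \<notin> cube r"
  then obtain b where "b \<in> Basis" "r < \<bar>x \<bullet> b\<bar>"
    by (auto simp: cube_def mem_box inner_minus_left abs_le_iff not_le)
  then show ?thesis using Basis_le_norm[of b x] by linarith
qed

lemma integrable_bounded_support:
  fixes f :: "'a::euclidean_space \<Rightarrow> 'b::euclidean_space"
  assumes "continuous_on UNIV f" "\<And>x. r < norm x \<Longrightarrow> f x = 0"
  shows "f integrable_on UNIV"
  using integrable_continuous_cube[OF assms(1)]
  by (rule integrable_on_superset) (use assms(2) norm_gt_if_notin_cube in auto)

lemma integral_eq_integral_cube:
  fixes f :: "'a::euclidean_space \<Rightarrow> 'b::euclidean_space"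
  assumes "\<And>x. r < norm x \<Longrightarrow> f x = 0" "r \<le> k"
  shows "integral UNIV f = integral (cube k) f"
proof -
  have "integral UNIV f = integral UNIV (\<lambda>x. if x \<in> cube k then f x else 0)"
    by (rule integral_cong) (use assms norm_gt_if_notin_cube in force)
  then show ?thesis by (simp add: integral_restrict_UNIV)
qed

lemma has_derivative_eq_0_outside_support:
  fixes G :: "'a::real_normed_vector \<Rightarrow> 'b::real_normed_vector"
  assumes "(G has_derivative G') (at x)" "\<And>x. r < norm x \<Longrightarrow> G x = 0" "r < norm x"
  shows "G' = (\<lambda>_. 0)"
proof -
  have "open {x::'a. r < norm x}"
    by (intro open_Collect_less continuous_intros)
  then have "((\<lambda>_. 0) has_derivative G') (at x)"
    by (rule has_derivative_transform_within_open[OF assms(1)]) (use assms(2,3) in auto)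
  then show ?thesis using has_derivative_unique has_derivative_const by blast
qed

lemma has_integral_translate_bounded_support:
  fixes G :: "'a::euclidean_space \<Rightarrow> real"
  assumes "continuous_on UNIV G" "\<And>x. r < norm x \<Longrightarrow> G x = 0"
  shows "((\<lambda>x. G (x + c)) has_integral integral UNIV G) UNIV"
proof -
  from integrable_continuous_cube[OF assms(1)] have "(G has_integral integral UNIV G) (cube r)"
    using integral_eq_integral_cube[of r G r] assms(2) by (simp add: integrable_integral)
  then have "((\<lambda>x. G (x + c)) has_integral integral UNIV G) (cbox (- (r *\<^sub>R One) - c) (r *\<^sub>R One - c))"
    unfolding cube_def by (rule has_integral_shift_cbox)
  then show ?thesis
  proof (rule has_integral_on_superset)
    fix x assume "x \<notin> cbox (- (r *\<^sub>R One) - c) (r *\<^sub>R One - c)"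
    then have "x + c \<notin> cube r"
      by (fastforce simp: cube_def mem_box inner_add_left inner_diff_left)
    then show "G (x + c) = 0" using assms(2) norm_gt_if_notin_cube by blast
  qed auto
qed

lemma has_real_derivative_along_line:
  assumes "\<And>x. (G has_derivative G' x) (at x)"
  shows "((\<lambda>s. G (x + s *\<^sub>R b)) has_real_derivative G' (x + s *\<^sub>R b) b) (at s)"
proof -
  have "((\<lambda>s. x + s *\<^sub>R b) has_derivative (\<lambda>s'. s' *\<^sub>R b)) (at s)"
    by (auto intro!: derivative_eq_intros)
  from has_derivative_compose[OF this assms]
  have "((\<lambda>s. G (x + s *\<^sub>R b)) has_derivative (\<lambda>s'. G' (x + s *\<^sub>R b) (s' *\<^sub>R b))) (at s)" .
  moreover have "(\<lambda>s'. G' (x + s *\<^sub>R b) (s' *\<^sub>R b)) = (*) (G' (x + s *\<^sub>R b) b)"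
    using has_derivative_linear[OF assms] by (intro ext) (simp add: linear_scale mult.commute)
  ultimately show ?thesis by (simp only: has_field_derivative_def)
qed

lemma abs_difference_quotient_le:
  assumes "\<And>x. (G has_derivative G' x) (at x)" "\<And>y. \<bar>G' y b\<bar> \<le> M" "0 < h"
  shows "\<bar>(G (x + h *\<^sub>R b) - G x) / h\<bar> \<le> M"
proof -
  obtain z where "G (x + h *\<^sub>R b) - G (x + 0 *\<^sub>R b) = (h - 0) * G' (x + z *\<^sub>R b) b"
    using MVT2[of 0 h "\<lambda>s. G (x + s *\<^sub>R b)" "\<lambda>s. G' (x + s *\<^sub>R b) b"]
      has_real_derivative_along_line[OF assms(1)] assms(3) by blast
  then show ?thesis using assms(2,3) by simp
qed

lemma abs_difference_quotient_le_cube: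
  assumes G: "\<And>x. (G has_derivative G' x) (at x)" and M: "\<And>y. \<bar>G' y b\<bar> \<le> M"
    and supp: "\<And>x. r < norm x \<Longrightarrow> G x = 0" and h: "0 < h" "h \<le> 1"
  shows "\<bar>(G (x + h *\<^sub>R b) - G x) / h\<bar> \<le> (if x \<in> cube (r + norm b) then M else 0)"
proof (cases "x \<in> cube (r + norm b)")
  case True
  then show ?thesis using abs_difference_quotient_le[OF G M h(1)] by simp
next
  case False
  then have "r + norm b < norm x" by (rule norm_gt_if_notin_cube)
  moreover have "norm x - norm (h *\<^sub>R b) \<le> norm (x + h *\<^sub>R b)"
    by (rule norm_diff_ineq)
  moreover have "norm (h *\<^sub>R b) \<le> norm b"
    using h by (simp add: mult_left_le_one_le)
  ultimately have "r < norm (x + h *\<^sub>R b)" "r < norm x"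
    using norm_ge_zero[of b] by linarith+
  then show ?thesis using False by (simp add: supp)
qed

lemma bounded_support_abs_le:
  fixes f :: "'a::euclidean_space \<Rightarrow> real"
  assumes "continuous_on UNIV f" "\<And>x. r < norm x \<Longrightarrow> f x = 0"
  obtains M where "\<And>x. \<bar>f x\<bar> \<le> M"
proof -
  obtain M where "\<And>y. y \<in> cball 0 r \<Longrightarrow> \<bar>f y\<bar> \<le> M"
    using compact_imp_bounded[OF compact_continuous_image[OF continuous_on_subset[OF assms(1)] compact_cball]]
    unfolding bounded_iff by (metis image_eqI real_norm_def subset_UNIV)
  then have "\<bar>f y\<bar> \<le> max M 0" for y
    using assms(2)[of y] by (cases "norm y \<le> r") (auto simp: le_max_iff_disj)
  with that show ?thesis by blast
qed

(* The difference quotients along b integrate to 0 by translation invariance and converge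
   to G' x b under a uniform bound with bounded support. *)
lemma integral_partial_derivative_eq_0:
  fixes G :: "'a::euclidean_space \<Rightarrow> real"
  assumes G: "\<And>x. (G has_derivative G' x) (at x)"
    and G'_cont: "continuous_on UNIV (\<lambda>x. G' x b)"
    and supp: "\<And>x. r < norm x \<Longrightarrow> G x = 0"
  shows "((\<lambda>x. G' x b) has_integral 0) UNIV"
proof -
  have "G' x b = 0" if "r < norm x" for x
    using has_derivative_eq_0_outside_support[OF G supp that] by simp
  then obtain M where M: "\<And>y. \<bar>G' y b\<bar> \<le> M"
    using bounded_support_abs_le[OF G'_cont] by blast
  define h :: "nat \<Rightarrow> real" where "h n = inverse (real (Suc n))" for n
  have h: "0 < h n" "h n \<le> 1" for n by (auto simp: h_def field_simps)
  define f where "f n x = (G (x + h n *\<^sub>R b) - G x) / h n" for n x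
  have G_cont: "continuous_on UNIV G"
    using G has_derivative_continuous continuous_at_imp_continuous_on by blast
  have f_int: "(f n has_integral 0) UNIV" for n
  proof -
    have "G integrable_on UNIV" by (rule integrable_bounded_support[OF G_cont supp])
    then have "((\<lambda>x. G (x + h n *\<^sub>R b) - G x) has_integral (integral UNIV G - integral UNIV G)) UNIV"
      by (intro has_integral_diff has_integral_translate_bounded_support[OF G_cont supp] integrable_integral)
    from has_integral_divide[OF this, of "h n"] show ?thesis by (simp add: f_def[abs_def])
  qed
  have f_tendsto: "(\<lambda>n. f n x) \<longlonglongrightarrow> G' x b" for x
  proof -
    have "(\<lambda>s. (G (x + s *\<^sub>R b) - G x) / s) \<midarrow>0\<rightarrow> G' x b"
      using DERIV_D[OF has_real_derivative_along_line[OF G, of x b 0]] by simp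
    moreover have "\<forall>n. h n \<noteq> 0" "h \<longlonglongrightarrow> 0"
      using h LIMSEQ_inverse_real_of_nat by (auto simp: h_def[abs_def])
    ultimately show ?thesis
      unfolding f_def
      using LIMSEQ_SEQ_conv[where X="\<lambda>s. (G (x + s *\<^sub>R b) - G x) / s" and a=0 and L="G' x b"]
      by blast
  qed
  have "norm (f n x) \<le> (if x \<in> cube (r + norm b) then M else 0)" for n x
    unfolding f_def real_norm_def by (rule abs_difference_quotient_le_cube[OF G M supp h])
  moreover have "(\<lambda>x. if x \<in> cube (r + norm b) then M else 0) integrable_on UNIV"
    unfolding integrable_restrict_UNIV cube_def by (rule integrable_const)
  ultimately have dominated: "(\<lambda>x. G' x b) integrable_on UNIV"
    "(\<lambda>n. integral UNIV (f n)) \<longlonglongrightarrow> integral UNIV (\<lambda>x. G' x b)"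
    using dominated_convergence[OF has_integral_integrable[OF f_int] _ _ f_tendsto] by blast+
  have "integral UNIV (f n) = 0" for n using f_int integral_unique by blast
  with dominated(2) have "integral UNIV (\<lambda>x. G' x b) = 0"
    by (simp add: LIMSEQ_const_iff)
  with integrable_integral[OF dominated(1)] show ?thesis by simp
qed

section \<open>A cutoff function and a regularised absolute value\<close>

lemma has_real_derivative_max_0_power2:
  "((\<lambda>r. (max 0 r)\<^sup>2) has_real_derivative 2 * max 0 r) (at r)"
proof (cases r "0::real" rule: linorder_cases)
  case less
  have "((\<lambda>r. 0) has_real_derivative 0) (at r)" by simp
  then have "((\<lambda>r. (max 0 r)\<^sup>2) has_real_derivative 0) (at r)"
    by (rule has_field_derivative_transform_within_open[where S="{..<0}"]) (use less in auto)
  with less show ?thesis by simp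
next
  case equal
  have "(\<lambda>h::real. ((max 0 h)\<^sup>2 - (max 0 0)\<^sup>2) / h) \<midarrow>0\<rightarrow> 0"
  proof (rule Lim_null_comparison)
    show "\<forall>\<^sub>F h in at 0. norm (((max 0 h)\<^sup>2 - (max 0 0)\<^sup>2) / h) \<le> \<bar>h\<bar>"
      by (intro always_eventually allI) (auto simp: max_def power2_eq_square abs_mult divide_simps)
    show "((\<lambda>h::real. \<bar>h\<bar>) \<longlongrightarrow> 0) (at 0)"
      using tendsto_rabs[OF tendsto_ident_at[of 0 UNIV]] by simp
  qed
  then show ?thesis using equal by (simp add: DERIV_def)
next
  case greater
  have "((\<lambda>r. r\<^sup>2) has_real_derivative 2 * r) (at r)"
    by (auto intro!: derivative_eq_intros)
  then have "((\<lambda>r. (max 0 r)\<^sup>2) has_real_derivative 2 * r) (at r)"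
    by (rule has_field_derivative_transform_within_open[where S="{0<..}"]) (use greater in auto)
  with greater show ?thesis by simp
qed

definition cutoff :: "real \<Rightarrow> 'a::euclidean_space \<Rightarrow> real" where
  "cutoff R x = (max 0 (1 - inverse (R\<^sup>2) * (x \<bullet> x)))\<^sup>2"

definition cutoff_grad :: "real \<Rightarrow> 'a::euclidean_space \<Rightarrow> 'a" where
  "cutoff_grad R x = (- 4 * inverse (R\<^sup>2) * max 0 (1 - inverse (R\<^sup>2) * (x \<bullet> x))) *\<^sub>R x"

lemma has_derivative_cutoff: "(cutoff R has_derivative (\<lambda>h. cutoff_grad R x \<bullet> h)) (at x)"
proof -
  define m where "m = max 0 (1 - inverse (R\<^sup>2) * (x \<bullet> x))"
  have "((\<lambda>x. 1 - inverse (R\<^sup>2) * (x \<bullet> x)) has_derivative (\<lambda>h. - (inverse (R\<^sup>2) * (2 * (x \<bullet> h))))) (at x)"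
    by (auto intro!: derivative_eq_intros simp: inner_commute)
  from has_derivative_compose[OF this has_real_derivative_max_0_power2[unfolded has_field_derivative_def]]
  have "(cutoff R has_derivative (\<lambda>h. 2 * m * - (inverse (R\<^sup>2) * (2 * (x \<bullet> h))))) (at x)"
    by (simp add: cutoff_def[abs_def] m_def mult.commute)
  moreover have "(\<lambda>h. 2 * m * - (inverse (R\<^sup>2) * (2 * (x \<bullet> h)))) = (\<lambda>h. cutoff_grad R x \<bullet> h)"
    by (auto simp: cutoff_grad_def m_def algebra_simps)
  ultimately show ?thesis by simp
qed

lemma continuous_on_cutoff: "continuous_on UNIV (cutoff R)"
  unfolding cutoff_def by (intro continuous_intros)

lemma continuous_on_cutoff_grad: "continuous_on UNIV (cutoff_grad R)"
  unfolding cutoff_grad_def by (intro continuous_intros)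

lemma cutoff_nonneg: "0 \<le> cutoff R x"
  by (simp add: cutoff_def)

lemma cutoff_le_1: "cutoff R x \<le> 1"
  unfolding cutoff_def by (intro power_le_one) (auto simp: divide_nonneg_nonneg)

lemma cutoff_base_neg:
  assumes "0 < R" "R < norm x"
  shows "1 - inverse (R\<^sup>2) * (x \<bullet> x) < 0"
proof -
  have "R\<^sup>2 < (norm x)\<^sup>2" using assms by (simp add: power_strict_mono)
  then show ?thesis using assms by (simp add: dot_square_norm field_simps)
qed

lemma cutoff_eq_0: "0 < R \<Longrightarrow> R < norm x \<Longrightarrow> cutoff R x = 0"
  using cutoff_base_neg[of R x] by (simp add: cutoff_def)

lemma cutoff_grad_eq_0: "0 < R \<Longrightarrow> R < norm x \<Longrightarrow> cutoff_grad R x = 0"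
  using cutoff_base_neg[of R x] by (simp add: cutoff_grad_def)

lemma norm_cutoff_grad_le:
  assumes "0 < R"
  shows "norm (cutoff_grad R x) \<le> 4 / R"
proof (cases "norm x \<le> R")
  case True
  have m: "0 \<le> max 0 (1 - inverse (R\<^sup>2) * (x \<bullet> x))" "max 0 (1 - inverse (R\<^sup>2) * (x \<bullet> x)) \<le> 1"
    by auto
  have "norm (cutoff_grad R x) = 4 * inverse (R\<^sup>2) * max 0 (1 - inverse (R\<^sup>2) * (x \<bullet> x)) * norm x"
    by (simp add: cutoff_grad_def abs_mult)
  also have "\<dots> \<le> 4 * inverse (R\<^sup>2) * 1 * R"
    by (intro mult_mono m True) auto
  also have "\<dots> = 4 / R"
    using assms by (simp add: power2_eq_square field_simps)
  finally show ?thesis .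
qed (use assms cutoff_grad_eq_0[of R x] in simp)

lemma cutoff_mono:
  assumes "0 < R" "R \<le> R'"
  shows "cutoff R x \<le> cutoff R' x"
proof -
  have "inverse (R'\<^sup>2) * (x \<bullet> x) \<le> inverse (R\<^sup>2) * (x \<bullet> x)"
    using assms by (intro mult_right_mono le_imp_inverse_le power_mono) auto
  then show ?thesis unfolding cutoff_def by (intro power_mono) auto
qed

lemma cutoff_tendsto_1: "(\<lambda>n. cutoff (real (Suc n)) x) \<longlonglongrightarrow> 1"
proof -
  have "(\<lambda>n. (inverse (real (Suc n)))\<^sup>2 * (x \<bullet> x)) \<longlonglongrightarrow> 0\<^sup>2 * (x \<bullet> x)"
    by (intro tendsto_intros LIMSEQ_inverse_real_of_nat)
  then have "(\<lambda>n. (max 0 (1 - (inverse (real (Suc n)))\<^sup>2 * (x \<bullet> x)))\<^sup>2) \<longlonglongrightarrow> (max 0 (1 - 0))\<^sup>2"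
    by (intro tendsto_intros) auto
  then show ?thesis by (simp add: cutoff_def power_inverse)
qed

definition abs_reg :: "real \<Rightarrow> real \<Rightarrow> real" where
  "abs_reg e r = sqrt (e + r\<^sup>2)"

definition sgn_reg :: "real \<Rightarrow> real \<Rightarrow> real" where
  "sgn_reg e r = r / sqrt (e + r\<^sup>2)"

definition sgn_reg' :: "real \<Rightarrow> real \<Rightarrow> real" where
  "sgn_reg' e r = e / ((e + r\<^sup>2) * sqrt (e + r\<^sup>2))"

lemma pos_add_power2: "0 < e \<Longrightarrow> 0 < e + (r::real)\<^sup>2"
  by (simp add: add_pos_nonneg)

lemma has_real_derivative_abs_reg:
  assumes "0 < e"
  shows "(abs_reg e has_real_derivative sgn_reg e r) (at r)"
  using pos_add_power2[OF assms, of r] unfolding abs_reg_def[abs_def] sgn_reg_def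
  by (auto intro!: derivative_eq_intros simp: field_simps)

lemma has_real_derivative_sgn_reg:
  assumes "0 < e"
  shows "(sgn_reg e has_real_derivative sgn_reg' e r) (at r)"
proof -
  have "0 < e + r\<^sup>2" by (rule pos_add_power2[OF assms])
  moreover have "sqrt (e + r\<^sup>2) * sqrt (e + r\<^sup>2) = e + r\<^sup>2" using calculation by simp
  ultimately show ?thesis unfolding sgn_reg_def[abs_def] sgn_reg'_def
    by (auto intro!: derivative_eq_intros simp: field_simps power2_eq_square)
qed

lemma sgn_reg'_nonneg: "0 < e \<Longrightarrow> 0 \<le> sgn_reg' e r"
  by (simp add: sgn_reg'_def pos_add_power2)

lemma continuous_on_abs_reg: "continuous_on UNIV (abs_reg e)"
  unfolding abs_reg_def by (intro continuous_intros)

lemma continuous_on_sgn_reg: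
  assumes "0 < e"
  shows "continuous_on UNIV (sgn_reg e)"
proof -
  have "e + r\<^sup>2 \<noteq> 0" for r using pos_add_power2[OF assms, of r] by simp
  then show ?thesis unfolding sgn_reg_def by (intro continuous_intros) auto
qed

lemma continuous_on_sgn_reg':
  assumes "0 < e"
  shows "continuous_on UNIV (sgn_reg' e)"
proof -
  have "e + r\<^sup>2 \<noteq> 0" for r using pos_add_power2[OF assms, of r] by simp
  then show ?thesis unfolding sgn_reg'_def by (intro continuous_intros) auto
qed

lemma abs_sgn_reg_le_1:
  assumes "0 < e"
  shows "\<bar>sgn_reg e r\<bar> \<le> 1"
proof -
  have "\<bar>r\<bar> \<le> sqrt (e + r\<^sup>2)" using assms by (intro real_le_rsqrt) simp
  then show ?thesis using pos_add_power2[OF assms, of r] by (simp add: sgn_reg_def abs_div)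
qed

lemma abs_reg_nonneg: "0 \<le> e \<Longrightarrow> 0 \<le> abs_reg e r"
  by (simp add: abs_reg_def)

lemma abs_reg_le: "e \<le> 1 \<Longrightarrow> abs_reg e r \<le> \<bar>r\<bar> + 1"
  unfolding abs_reg_def by (intro real_le_lsqrt) (auto simp: power2_eq_square algebra_simps)

lemma sgn_reg_tendsto: "(e \<longlongrightarrow> 0) F \<Longrightarrow> ((\<lambda>n. sgn_reg (e n) r) \<longlongrightarrow> sgn r) F"
proof (cases "r = 0")
  case False
  moreover assume "(e \<longlongrightarrow> 0) F"
  ultimately have "((\<lambda>n. r / sqrt (e n + r\<^sup>2)) \<longlongrightarrow> r / sqrt (0 + r\<^sup>2)) F"
    by (intro tendsto_intros) auto
  then show ?thesis by (simp add: sgn_reg_def real_sgn_eq)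
qed (simp add: sgn_reg_def)

lemma abs_reg_tendsto: "(e \<longlongrightarrow> 0) F \<Longrightarrow> ((\<lambda>n. abs_reg (e n) r) \<longlongrightarrow> \<bar>r\<bar>) F"
  unfolding abs_reg_def by (auto intro!: tendsto_eq_intros)

section \<open>Kato's inequality for the generator\<close>

lemma has_derivative_exp_minus:
  assumes "Ck 2 V"
  shows "((\<lambda>x. exp (- V x)) has_derivative (\<lambda>h. exp (- V x) * - (grad V x \<bullet> h))) (at x)"
proof -
  have "((\<lambda>x. - V x) has_derivative (\<lambda>h. - (grad V x \<bullet> h))) (at x)"
    by (intro has_derivative_minus has_derivative_grad Ck2_differentiable[OF assms])
  from has_derivative_compose[OF this DERIV_exp[unfolded has_field_derivative_def]]
  show ?thesis .
qed

lemma inner_grad_eq_sum: "v \<bullet> grad f x = (\<Sum>b\<in>Basis. (v \<bullet> b) * pdiff f b x)"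
  by (subst euclidean_inner) (simp add: grad_inner_Basis)

lemma genL_eq_sum: "genL V f x = (\<Sum>b\<in>Basis. pdiff (pdiff f b) b x - pdiff V b x * pdiff f b x)"
proof -
  have "grad V x \<bullet> grad f x = (\<Sum>b\<in>Basis. pdiff V b x * pdiff f b x)"
    unfolding inner_grad_eq_sum by (rule sum.cong) (simp_all add: grad_inner_Basis)
  then show ?thesis by (simp add: genL_def laplacian_def sum_subtractf)
qed

(* The integrand is the divergence of the vector field phi e^-V grad w. *)
lemma has_integral_divergence_weighted_grad:
  fixes w V \<phi> :: "'a::euclidean_space \<Rightarrow> real" and g\<phi> :: "'a \<Rightarrow> 'a"
  assumes w: "Ck 2 w" and V: "Ck 2 V"
    and \<phi>: "\<And>x. (\<phi> has_derivative (\<lambda>h. g\<phi> x \<bullet> h)) (at x)"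
    and g\<phi>_cont: "continuous_on UNIV g\<phi>"
    and supp: "\<And>x. r < norm x \<Longrightarrow> \<phi> x = 0"
  shows "((\<lambda>x. (\<phi> x * genL V w x + g\<phi> x \<bullet> grad w x) * exp (- V x)) has_integral 0) UNIV"
proof -
  define \<pi> where "\<pi> x = exp (- V x)" for x
  have \<pi>_cont: "continuous_on UNIV \<pi>"
    unfolding \<pi>_def by (intro continuous_intros Ck2_continuous[OF V])
  have \<phi>_cont: "continuous_on UNIV \<phi>"
    using \<phi> has_derivative_continuous continuous_at_imp_continuous_on by blast
  define G where "G b x = \<phi> x * \<pi> x * pdiff w b x" for b x
  define G' where "G' b x h = \<phi> x * \<pi> x * (grad (pdiff w b) x \<bullet> h)
      + (\<phi> x * (\<pi> x * - (grad V x \<bullet> h)) + (g\<phi> x \<bullet> h) * \<pi> x) * pdiff w b x" for b x h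
  have G: "(G b has_derivative G' b x) (at x)" if "b \<in> Basis" for b x
    unfolding G_def[abs_def] G'_def \<pi>_def
    by (intro has_derivative_mult \<phi> has_derivative_exp_minus[OF V]
        has_derivative_grad Ck2_pdiff_differentiable[OF w that])
  have G'_diag: "G' b x b = \<pi> x * (\<phi> x * (pdiff (pdiff w b) b x - pdiff V b x * pdiff w b x)
      + (g\<phi> x \<bullet> b) * pdiff w b x)" if "b \<in> Basis" for b x
    using that by (simp add: G'_def grad_inner_Basis algebra_simps)
  have G'_int: "((\<lambda>x. G' b x b) has_integral 0) UNIV" if b: "b \<in> Basis" for b
  proof (rule integral_partial_derivative_eq_0[OF G[OF b]])
    show "continuous_on UNIV (\<lambda>x. G' b x b)"
      unfolding G'_diag[OF b]
      using \<phi>_cont \<pi>_cont g\<phi>_cont Ck2_pdiff_pdiff_continuous[OF w b b] Ck2_pdiff_continuous[OF w b]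
        Ck2_pdiff_continuous[OF V b]
      by (intro continuous_intros)
    show "G b x = 0" if "r < norm x" for x
      using supp[OF that] by (simp add: G_def)
  qed
  have "(\<Sum>b\<in>Basis. G' b x b) = (\<phi> x * genL V w x + g\<phi> x \<bullet> grad w x) * \<pi> x" for x
  proof -
    have "(\<Sum>b\<in>Basis. G' b x b) = (\<Sum>b\<in>Basis. \<pi> x * (\<phi> x * (pdiff (pdiff w b) b x
        - pdiff V b x * pdiff w b x) + (g\<phi> x \<bullet> b) * pdiff w b x))"
      by (rule sum.cong) (simp_all add: G'_diag)
    also have "\<dots> = \<pi> x * (\<phi> x * (\<Sum>b\<in>Basis. pdiff (pdiff w b) b x - pdiff V b x * pdiff w b x)
        + (\<Sum>b\<in>Basis. (g\<phi> x \<bullet> b) * pdiff w b x))"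
      by (simp add: sum.distrib sum_distrib_left distrib_left)
    finally show ?thesis by (simp add: genL_eq_sum inner_grad_eq_sum mult.commute)
  qed
  with has_integral_sum[of Basis "\<lambda>b x. G' b x b" "\<lambda>_. 0" UNIV] G'_int show ?thesis
    by (simp add: \<pi>_def)
qed

lemma integral_genL_by_parts:
  fixes w V \<phi> :: "'a::euclidean_space \<Rightarrow> real" and g\<phi> :: "'a \<Rightarrow> 'a"
  assumes w: "Ck 2 w" and V: "Ck 2 V"
    and \<phi>: "\<And>x. (\<phi> has_derivative (\<lambda>h. g\<phi> x \<bullet> h)) (at x)"
    and g\<phi>_cont: "continuous_on UNIV g\<phi>"
    and supp: "\<And>x. r < norm x \<Longrightarrow> \<phi> x = 0"
  shows "integral UNIV (\<lambda>x. \<phi> x * genL V w x * exp (- V x))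
       = - integral UNIV (\<lambda>x. (g\<phi> x \<bullet> grad w x) * exp (- V x))"
proof -
  have \<phi>_cont: "continuous_on UNIV \<phi>"
    using \<phi> has_derivative_continuous continuous_at_imp_continuous_on by blast
  have g\<phi>_0: "g\<phi> x = 0" if "r < norm x" for x
    using has_derivative_eq_0_outside_support[OF \<phi> supp that] by (metis inner_eq_zero_iff)
  have "(\<lambda>x. \<phi> x * genL V w x * exp (- V x)) integrable_on UNIV"
    using \<phi>_cont continuous_on_genL[OF w V] Ck2_continuous[OF V] supp
    by (intro integrable_bounded_support[of _ r] continuous_intros) auto
  moreover have "(\<lambda>x. (g\<phi> x \<bullet> grad w x) * exp (- V x)) integrable_on UNIV"
    using g\<phi>_cont continuous_on_grad[OF w] Ck2_continuous[OF V] g\<phi>_0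
    by (intro integrable_bounded_support[of _ r] continuous_intros) auto
  moreover note has_integral_divergence_weighted_grad[OF w V \<phi> g\<phi>_cont supp]
  ultimately show ?thesis
    by (simp add: distrib_right integral_add[symmetric] integral_unique eq_neg_iff_add_eq_0)
qed

(* Integrating by parts against sgn_reg e (w x) * psi x produces the integrand on the left;
   its part sgn_reg' e (w x) psi |grad w|^2 has a favourable sign and is dropped. *)
lemma kato_pointwise_bound:
  fixes u v :: "'a::real_inner"
  assumes "0 < e" "0 \<le> p"
  shows "- (((sgn_reg' e r * p) *\<^sub>R v + sgn_reg e r *\<^sub>R u) \<bullet> v) \<le> norm u * norm v"
proof -
  have "\<bar>sgn_reg e r\<bar> * \<bar>u \<bullet> v\<bar> \<le> 1 * (norm u * norm v)"
    by (intro mult_mono abs_sgn_reg_le_1[OF assms(1)] Cauchy_Schwarz_ineq2) auto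
  then have "- (sgn_reg e r * (u \<bullet> v)) \<le> norm u * norm v"
    using abs_ge_minus_self[of "sgn_reg e r * (u \<bullet> v)"] by (simp add: abs_mult)
  moreover have "0 \<le> sgn_reg' e r * p * (v \<bullet> v)"
    using sgn_reg'_nonneg[OF assms(1)] assms(2) by simp
  ultimately show ?thesis by (simp add: inner_add_left)
qed

lemma kato_inequality_sgn_reg:
  fixes w V \<psi> :: "'a::euclidean_space \<Rightarrow> real" and g\<psi> :: "'a \<Rightarrow> 'a"
  assumes w: "Ck 2 w" and V: "Ck 2 V"
    and \<psi>: "\<And>x. (\<psi> has_derivative (\<lambda>h. g\<psi> x \<bullet> h)) (at x)"
    and g\<psi>_cont: "continuous_on UNIV g\<psi>"
    and \<psi>_nonneg: "\<And>x. 0 \<le> \<psi> x"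
    and supp: "\<And>x. r < norm x \<Longrightarrow> \<psi> x = 0"
    and e: "0 < e"
  shows "integral UNIV (\<lambda>x. sgn_reg e (w x) * (\<psi> x * exp (- V x) * genL V w x))
    \<le> integral UNIV (\<lambda>x. norm (g\<psi> x) * norm (grad w x) * exp (- V x))"
proof -
  define \<phi> where "\<phi> x = sgn_reg e (w x) * \<psi> x" for x
  define g\<phi> where "g\<phi> x = (sgn_reg' e (w x) * \<psi> x) *\<^sub>R grad w x + sgn_reg e (w x) *\<^sub>R g\<psi> x" for x
  have "((\<lambda>x. sgn_reg e (w x)) has_derivative (\<lambda>h. sgn_reg' e (w x) * (grad w x \<bullet> h))) (at x)" for x
    using has_derivative_compose[OF has_derivative_grad[OF Ck2_differentiable[OF w]]
        has_real_derivative_sgn_reg[OF e, unfolded has_field_derivative_def]] .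
  from has_derivative_mult[OF this \<psi>]
  have \<phi>: "(\<phi> has_derivative (\<lambda>h. g\<phi> x \<bullet> h)) (at x)" for x
    by (simp add: \<phi>_def[abs_def] g\<phi>_def inner_add_left algebra_simps)
  have "continuous_on UNIV (\<lambda>x. sgn_reg e (w x))" "continuous_on UNIV (\<lambda>x. sgn_reg' e (w x))"
    by (auto intro!: continuous_on_compose2[OF _ Ck2_continuous[OF w]]
        continuous_on_sgn_reg[OF e] continuous_on_sgn_reg'[OF e])
  moreover have "continuous_on UNIV \<psi>"
    using \<psi> has_derivative_continuous continuous_at_imp_continuous_on by blast
  ultimately have g\<phi>_cont: "continuous_on UNIV g\<phi>"
    unfolding g\<phi>_def using g\<psi>_cont continuous_on_grad[OF w] by (intro continuous_intros)
  have g\<psi>_0: "g\<psi> x = 0" if "r < norm x" for x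
    using has_derivative_eq_0_outside_support[OF \<psi> supp that] by (metis inner_eq_zero_iff)
  have "integral UNIV (\<lambda>x. sgn_reg e (w x) * (\<psi> x * exp (- V x) * genL V w x))
      = integral UNIV (\<lambda>x. - ((g\<phi> x \<bullet> grad w x) * exp (- V x)))"
    using integral_genL_by_parts[OF w V \<phi> g\<phi>_cont, of r] supp by (simp add: \<phi>_def algebra_simps)
  also have "\<dots> \<le> integral UNIV (\<lambda>x. norm (g\<psi> x) * norm (grad w x) * exp (- V x))"
  proof (rule integral_le)
    show "(\<lambda>x. - ((g\<phi> x \<bullet> grad w x) * exp (- V x))) integrable_on UNIV"
      using g\<phi>_cont continuous_on_grad[OF w] Ck2_continuous[OF V] g\<psi>_0 supp
      by (intro integrable_bounded_support[of _ r] continuous_intros) (auto simp: g\<phi>_def)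
    show "(\<lambda>x. norm (g\<psi> x) * norm (grad w x) * exp (- V x)) integrable_on UNIV"
      using g\<psi>_cont continuous_on_grad[OF w] Ck2_continuous[OF V] g\<psi>_0
      by (intro integrable_bounded_support[of _ r] continuous_intros) auto
    show "- ((g\<phi> x \<bullet> grad w x) * exp (- V x)) \<le> norm (g\<psi> x) * norm (grad w x) * exp (- V x)" for x
    proof -
      have "- (g\<phi> x \<bullet> grad w x) \<le> norm (g\<psi> x) * norm (grad w x)"
        unfolding g\<phi>_def by (rule kato_pointwise_bound[OF e \<psi>_nonneg])
      from mult_right_mono[OF this, of "exp (- V x)"] show ?thesis by simp
    qed
  qed
  finally show ?thesis .
qed

lemma integral_sgn_reg_tendsto:
  fixes v F :: "'a::euclidean_space \<Rightarrow> real"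
  assumes v: "continuous_on UNIV v" and F: "continuous_on UNIV F"
    and supp: "\<And>x. r < norm x \<Longrightarrow> F x = 0"
  shows "(\<lambda>n. integral UNIV (\<lambda>x. sgn_reg (inverse (real (Suc n))) (v x) * F x))
    \<longlonglongrightarrow> integral UNIV (\<lambda>x. sgn (v x) * F x)"
proof (rule dominated_convergence(2))
  show "(\<lambda>x. sgn_reg (inverse (real (Suc n))) (v x) * F x) integrable_on UNIV" for n
    using continuous_on_sgn_reg[of "inverse (real (Suc n))"] v F supp
    by (intro integrable_bounded_support[of _ r] continuous_intros continuous_on_compose2[OF _ v]) auto
  show "(\<lambda>x. \<bar>F x\<bar>) integrable_on UNIV"
    using F supp by (intro integrable_bounded_support[of _ r] continuous_intros) auto
  show "norm (sgn_reg (inverse (real (Suc n))) (v x) * F x) \<le> \<bar>F x\<bar>" for n x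
    using abs_sgn_reg_le_1[of "inverse (real (Suc n))" "v x"] by (simp add: abs_mult mult_left_le_one_le)
  show "(\<lambda>n. sgn_reg (inverse (real (Suc n))) (v x) * F x) \<longlonglongrightarrow> sgn (v x) * F x" for x
    by (intro tendsto_mult sgn_reg_tendsto LIMSEQ_inverse_real_of_nat tendsto_const)
qed

lemma kato_inequality:
  fixes w V \<psi> :: "'a::euclidean_space \<Rightarrow> real" and g\<psi> :: "'a \<Rightarrow> 'a"
  assumes w: "Ck 2 w" and V: "Ck 2 V"
    and \<psi>: "\<And>x. (\<psi> has_derivative (\<lambda>h. g\<psi> x \<bullet> h)) (at x)"
    and g\<psi>_cont: "continuous_on UNIV g\<psi>"
    and \<psi>_nonneg: "\<And>x. 0 \<le> \<psi> x"
    and supp: "\<And>x. r < norm x \<Longrightarrow> \<psi> x = 0"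
  shows "integral UNIV (\<lambda>x. sgn (w x) * (\<psi> x * exp (- V x) * genL V w x))
    \<le> integral UNIV (\<lambda>x. norm (g\<psi> x) * norm (grad w x) * exp (- V x))"
proof (rule LIMSEQ_le_const2[OF integral_sgn_reg_tendsto])
  show "continuous_on UNIV w" by (rule Ck2_continuous[OF w])
  show "continuous_on UNIV (\<lambda>x. \<psi> x * exp (- V x) * genL V w x)"
    using \<psi> has_derivative_continuous continuous_at_imp_continuous_on
      Ck2_continuous[OF V] continuous_on_genL[OF w V]
    by (intro continuous_intros) blast+
  show "\<psi> x * exp (- V x) * genL V w x = 0" if "r < norm x" for x
    using supp[OF that] by simp
  show "\<exists>N. \<forall>n\<ge>N. integral UNIV (\<lambda>x. sgn_reg (inverse (real (Suc n))) (w x) * (\<psi> x * exp (- V x) * genL V w x))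
      \<le> integral UNIV (\<lambda>x. norm (g\<psi> x) * norm (grad w x) * exp (- V x))"
    using kato_inequality_sgn_reg[OF w V \<psi> g\<psi>_cont \<psi>_nonneg supp] by simp
qed

section \<open>Time evolution of a weighted \<open>L\<^sup>1\<close> norm\<close>

lemma continuous_on_slice:
  assumes "continuous_on (S \<times> UNIV) (\<lambda>(\<tau>, x). u \<tau> x)" "\<tau> \<in> S"
  shows "continuous_on UNIV (u \<tau>)"
proof -
  have "continuous_on UNIV (\<lambda>x. (\<lambda>(\<tau>, x). u \<tau> x) (\<tau>, x))"
    by (rule continuous_on_compose2[OF assms(1)]) (use assms(2) in \<open>auto intro!: continuous_intros\<close>)
  then show ?thesis by simp
qed

(* Fundamental theorem of calculus in time for abs_reg e o u, then Fubini on [s,t] x cube r. *)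
lemma weighted_abs_reg_evolution:
  fixes u g :: "real \<Rightarrow> 'a::euclidean_space \<Rightarrow> real" and \<rho> :: "'a \<Rightarrow> real"
  assumes st: "s \<le> t"
    and u_cont: "continuous_on ({s..t} \<times> UNIV) (\<lambda>(\<tau>, x). u \<tau> x)"
    and g_cont: "continuous_on ({s..t} \<times> UNIV) (\<lambda>(\<tau>, x). g \<tau> x)"
    and u_deriv: "\<And>\<tau> x. \<tau> \<in> {s..t} \<Longrightarrow> ((\<lambda>\<tau>. u \<tau> x) has_real_derivative g \<tau> x) (at \<tau> within {s..t})"
    and \<rho>_cont: "continuous_on UNIV \<rho>"
    and e: "0 < e"
  shows "integral (cube r) (\<lambda>x. \<rho> x * (abs_reg e (u t x) - abs_reg e (u s x)))
       = integral {s..t} (\<lambda>\<tau>. integral (cube r) (\<lambda>x. \<rho> x * (sgn_reg e (u \<tau> x) * g \<tau> x)))"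
proof -
  define H where "H \<tau> x = \<rho> x * (sgn_reg e (u \<tau> x) * g \<tau> x)" for \<tau> x
  have "continuous_on ({s..t} \<times> UNIV) (\<lambda>p. H (fst p) (snd p))"
    unfolding H_def using u_cont g_cont \<rho>_cont
    by (intro continuous_intros continuous_on_compose2[OF \<rho>_cont]
        continuous_on_compose2[OF continuous_on_sgn_reg[OF e]]) (auto simp: case_prod_unfold)
  then have H_cont: "continuous_on (cbox (s, - (r *\<^sub>R One)) (t, r *\<^sub>R One)) (\<lambda>(\<tau>, x). H \<tau> x)"
    unfolding case_prod_unfold by (rule continuous_on_subset) (auto simp: cbox_Pair_eq)
  have ftc: "((\<lambda>\<tau>. H \<tau> x) has_integral \<rho> x * (abs_reg e (u t x) - abs_reg e (u s x))) {s..t}" for x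
  proof -
    have "((\<lambda>\<tau>. \<rho> x * abs_reg e (u \<tau> x)) has_vector_derivative H \<tau> x) (at \<tau> within {s..t})"
      if "\<tau> \<in> {s..t}" for \<tau>
      using DERIV_cmult[OF DERIV_chain2[OF has_real_derivative_abs_reg[OF e] u_deriv[OF that]], of "\<rho> x"]
      unfolding has_real_derivative_iff_has_vector_derivative H_def by (simp add: mult.assoc)
    from fundamental_theorem_of_calculus[OF st this] show ?thesis
      by (simp add: right_diff_distrib)
  qed
  have "integral (cube r) (\<lambda>x. \<rho> x * (abs_reg e (u t x) - abs_reg e (u s x)))
      = integral (cube r) (\<lambda>x. integral {s..t} (\<lambda>\<tau>. H \<tau> x))"
    by (simp only: integral_unique[OF ftc])
  also have "\<dots> = integral {s..t} (\<lambda>\<tau>. integral (cube r) (H \<tau>))"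
    using integral_swap_continuous[OF H_cont] by (simp add: cube_def cbox_interval)
  finally show ?thesis
    by (simp only: H_def[abs_def])
qed

lemma continuous_on_integral_cube:
  fixes f :: "real \<Rightarrow> 'a::euclidean_space \<Rightarrow> real"
  assumes "continuous_on (S \<times> UNIV) (\<lambda>(\<tau>, x). f \<tau> x)"
  shows "continuous_on S (\<lambda>\<tau>. integral (cube r) (f \<tau>))"
  unfolding cube_def
  by (rule integral_continuous_on_param, rule continuous_on_subset[OF assms]) auto

lemma integral_abs_reg_diff_tendsto:
  fixes \<rho> v w :: "'a::euclidean_space \<Rightarrow> real"
  assumes \<rho>: "continuous_on UNIV \<rho>" and v: "continuous_on UNIV v" and w: "continuous_on UNIV w"
  shows "(\<lambda>n. integral (cube r) (\<lambda>x. \<rho> x * (abs_reg (inverse (real (Suc n))) (v x)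
      - abs_reg (inverse (real (Suc n))) (w x))))
    \<longlonglongrightarrow> integral (cube r) (\<lambda>x. \<rho> x * (\<bar>v x\<bar> - \<bar>w x\<bar>))"
proof (rule dominated_convergence(2))
  have e: "0 < inverse (real (Suc n))" "inverse (real (Suc n)) \<le> 1" for n
    by (auto simp: field_simps)
  show "(\<lambda>x. \<rho> x * (abs_reg (inverse (real (Suc n))) (v x) - abs_reg (inverse (real (Suc n))) (w x)))
      integrable_on cube r" for n
    using \<rho> v w by (intro integrable_continuous_cube continuous_intros continuous_on_compose2[OF continuous_on_abs_reg]) auto
  show "(\<lambda>x. \<bar>\<rho> x\<bar> * (\<bar>v x\<bar> + \<bar>w x\<bar> + 2)) integrable_on cube r"
    using \<rho> v w by (intro integrable_continuous_cube continuous_intros)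
  show "norm (\<rho> x * (abs_reg (inverse (real (Suc n))) (v x) - abs_reg (inverse (real (Suc n))) (w x)))
      \<le> \<bar>\<rho> x\<bar> * (\<bar>v x\<bar> + \<bar>w x\<bar> + 2)" for n x
  proof -
    have "\<bar>abs_reg (inverse (real (Suc n))) (v x) - abs_reg (inverse (real (Suc n))) (w x)\<bar>
        \<le> \<bar>v x\<bar> + \<bar>w x\<bar> + 2"
      using abs_reg_le[OF e(2), of n "v x"] abs_reg_le[OF e(2), of n "w x"]
        abs_reg_nonneg[of "inverse (real (Suc n))" "v x"] abs_reg_nonneg[of "inverse (real (Suc n))" "w x"]
      by (simp add: abs_le_iff)
    then show ?thesis by (simp add: abs_mult mult_left_mono)
  qed
  show "(\<lambda>n. \<rho> x * (abs_reg (inverse (real (Suc n))) (v x) - abs_reg (inverse (real (Suc n))) (w x)))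
      \<longlonglongrightarrow> \<rho> x * (\<bar>v x\<bar> - \<bar>w x\<bar>)" for x
    by (intro tendsto_intros abs_reg_tendsto LIMSEQ_inverse_real_of_nat)
qed

lemma norm_integral_sgn_reg_le:
  fixes \<rho> v g :: "'a::euclidean_space \<Rightarrow> real"
  assumes e: "0 < e" and \<rho>: "continuous_on UNIV \<rho>" and v: "continuous_on UNIV v" and g: "continuous_on UNIV g"
  shows "norm (integral (cube r) (\<lambda>x. \<rho> x * (sgn_reg e (v x) * g x)))
    \<le> integral (cube r) (\<lambda>x. \<bar>\<rho> x * g x\<bar>)"
proof (rule integral_norm_bound_integral)
  show "(\<lambda>x. \<rho> x * (sgn_reg e (v x) * g x)) integrable_on cube r"
    using \<rho> v g
    by (intro integrable_continuous_cube continuous_intros continuous_on_compose2[OF continuous_on_sgn_reg[OF e]]) auto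
  show "(\<lambda>x. \<bar>\<rho> x * g x\<bar>) integrable_on cube r"
    using \<rho> g by (intro integrable_continuous_cube continuous_intros)
  show "norm (\<rho> x * (sgn_reg e (v x) * g x)) \<le> \<bar>\<rho> x * g x\<bar>" for x
    using abs_sgn_reg_le_1[OF e, of "v x"] by (simp add: abs_mult mult_left_mono mult_left_le_one_le)
qed

lemma integral_sgn_reg_time_tendsto:
  fixes u g :: "real \<Rightarrow> 'a::euclidean_space \<Rightarrow> real" and \<rho> :: "'a \<Rightarrow> real"
  assumes u_cont: "continuous_on ({s..t} \<times> UNIV) (\<lambda>(\<tau>, x). u \<tau> x)"
    and g_cont: "continuous_on ({s..t} \<times> UNIV) (\<lambda>(\<tau>, x). g \<tau> x)"
    and \<rho>_cont: "continuous_on UNIV \<rho>"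
    and supp: "\<And>x. r < norm x \<Longrightarrow> \<rho> x = 0"
  defines "I \<equiv> \<lambda>\<tau>. integral UNIV (\<lambda>x. sgn (u \<tau> x) * (\<rho> x * g \<tau> x))"
  shows "I absolutely_integrable_on {s..t}"
    and "(\<lambda>n. integral {s..t} (\<lambda>\<tau>. integral (cube r)
           (\<lambda>x. \<rho> x * (sgn_reg (inverse (real (Suc n))) (u \<tau> x) * g \<tau> x))))
         \<longlonglongrightarrow> integral {s..t} I"
proof -
  define e :: "nat \<Rightarrow> real" where "e n = inverse (real (Suc n))" for n
  have e: "0 < e n" for n by (simp add: e_def)
  define J where "J n \<tau> = integral (cube r) (\<lambda>x. \<rho> x * (sgn_reg (e n) (u \<tau> x) * g \<tau> x))" for n \<tau>
  define B where "B \<tau> = integral (cube r) (\<lambda>x. \<bar>\<rho> x * g \<tau> x\<bar>)" for \<tau>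
  have u: "continuous_on UNIV (u \<tau>)" and g: "continuous_on UNIV (g \<tau>)" if "\<tau> \<in> {s..t}" for \<tau>
    using continuous_on_slice[OF u_cont that] continuous_on_slice[OF g_cont that] .
  have J_tendsto: "(\<lambda>n. J n \<tau>) \<longlonglongrightarrow> I \<tau>" if "\<tau> \<in> {s..t}" for \<tau>
  proof -
    have "J n \<tau> = integral UNIV (\<lambda>x. sgn_reg (e n) (u \<tau> x) * (\<rho> x * g \<tau> x))" for n
      unfolding J_def by (subst integral_eq_integral_cube[of r _ r]) (auto simp: supp algebra_simps)
    then show ?thesis unfolding I_def e_def
      using integral_sgn_reg_tendsto[OF u[OF that], of "\<lambda>x. \<rho> x * g \<tau> x" r] \<rho>_cont g[OF that] supp
      by (auto intro: continuous_intros)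
  qed
  have J_le_B: "norm (J n \<tau>) \<le> B \<tau>" if "\<tau> \<in> {s..t}" for n \<tau>
    unfolding J_def B_def by (rule norm_integral_sgn_reg_le[OF e \<rho>_cont u[OF that] g[OF that]])
  have J_cont: "continuous_on {s..t} (J n)" for n
    unfolding J_def
  proof (rule continuous_on_integral_cube)
    show "continuous_on ({s..t} \<times> UNIV) (\<lambda>(\<tau>, x). \<rho> x * (sgn_reg (e n) (u \<tau> x) * g \<tau> x))"
      using u_cont g_cont unfolding case_prod_unfold
      by (intro continuous_intros continuous_on_compose2[OF \<rho>_cont]
          continuous_on_compose2[OF continuous_on_sgn_reg[OF e]]) auto
  qed
  have B_cont: "continuous_on {s..t} B"
    unfolding B_def
  proof (rule continuous_on_integral_cube)
    show "continuous_on ({s..t} \<times> UNIV) (\<lambda>(\<tau>, x). \<bar>\<rho> x * g \<tau> x\<bar>)"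
      using g_cont unfolding case_prod_unfold
      by (intro continuous_intros continuous_on_compose2[OF \<rho>_cont]) auto
  qed
  note dominated = dominated_convergence[OF integrable_continuous_interval[OF J_cont]
      integrable_continuous_interval[OF B_cont] J_le_B J_tendsto]
  have "norm (I \<tau>) \<le> B \<tau>" if "\<tau> \<in> {s..t}" for \<tau>
    using LIMSEQ_le_const2[OF tendsto_norm[OF J_tendsto[OF that]]] J_le_B[OF that] by blast
  then show "I absolutely_integrable_on {s..t}"
    using absolutely_integrable_integrable_bound dominated(1) integrable_continuous_interval[OF B_cont]
    by blast
  show "(\<lambda>n. integral {s..t} (\<lambda>\<tau>. integral (cube r)
      (\<lambda>x. \<rho> x * (sgn_reg (inverse (real (Suc n))) (u \<tau> x) * g \<tau> x)))) \<longlonglongrightarrow> integral {s..t} I"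
    using dominated(2) by (simp add: J_def e_def)
qed

lemma weighted_abs_evolution:
  fixes u g :: "real \<Rightarrow> 'a::euclidean_space \<Rightarrow> real" and \<rho> :: "'a \<Rightarrow> real"
  assumes st: "s \<le> t"
    and u_cont: "continuous_on ({s..t} \<times> UNIV) (\<lambda>(\<tau>, x). u \<tau> x)"
    and g_cont: "continuous_on ({s..t} \<times> UNIV) (\<lambda>(\<tau>, x). g \<tau> x)"
    and u_deriv: "\<And>\<tau> x. \<tau> \<in> {s..t} \<Longrightarrow> ((\<lambda>\<tau>. u \<tau> x) has_real_derivative g \<tau> x) (at \<tau> within {s..t})"
    and \<rho>_cont: "continuous_on UNIV \<rho>"
    and supp: "\<And>x. r < norm x \<Longrightarrow> \<rho> x = 0"
  defines "I \<equiv> \<lambda>\<tau>. integral UNIV (\<lambda>x. sgn (u \<tau> x) * (\<rho> x * g \<tau> x))"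
  shows "I absolutely_integrable_on {s..t}"
    and "integral UNIV (\<lambda>x. \<rho> x * \<bar>u t x\<bar>) - integral UNIV (\<lambda>x. \<rho> x * \<bar>u s x\<bar>) = integral {s..t} I"
proof -
  show "I absolutely_integrable_on {s..t}"
    unfolding I_def by (rule integral_sgn_reg_time_tendsto(1)[OF u_cont g_cont \<rho>_cont supp])
  have s: "s \<in> {s..t}" and t: "t \<in> {s..t}" using st by auto
  note u = continuous_on_slice[OF u_cont s] continuous_on_slice[OF u_cont t]
  have "integral (cube r) (\<lambda>x. \<rho> x * (abs_reg (inverse (real (Suc n))) (u t x)
      - abs_reg (inverse (real (Suc n))) (u s x)))
    = integral {s..t} (\<lambda>\<tau>. integral (cube r)
      (\<lambda>x. \<rho> x * (sgn_reg (inverse (real (Suc n))) (u \<tau> x) * g \<tau> x)))" for n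
    by (rule weighted_abs_reg_evolution[OF st u_cont g_cont u_deriv \<rho>_cont]) auto
  with integral_abs_reg_diff_tendsto[OF \<rho>_cont u(2) u(1), of r]
  have "(\<lambda>n. integral {s..t} (\<lambda>\<tau>. integral (cube r)
      (\<lambda>x. \<rho> x * (sgn_reg (inverse (real (Suc n))) (u \<tau> x) * g \<tau> x))))
    \<longlonglongrightarrow> integral (cube r) (\<lambda>x. \<rho> x * (\<bar>u t x\<bar> - \<bar>u s x\<bar>))"
    by (simp only:)
  from LIMSEQ_unique[OF this integral_sgn_reg_time_tendsto(2)[OF u_cont g_cont \<rho>_cont supp]]
  have "integral (cube r) (\<lambda>x. \<rho> x * (\<bar>u t x\<bar> - \<bar>u s x\<bar>)) = integral {s..t} I"
    by (simp add: I_def)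
  moreover have "integral (cube r) (\<lambda>x. \<rho> x * (\<bar>u t x\<bar> - \<bar>u s x\<bar>))
      = integral UNIV (\<lambda>x. \<rho> x * \<bar>u t x\<bar>) - integral UNIV (\<lambda>x. \<rho> x * \<bar>u s x\<bar>)"
    using \<rho>_cont u supp
    by (simp add: right_diff_distrib integral_diff integrable_continuous_cube continuous_intros
        integral_eq_integral_cube[of r _ r])
  ultimately show "integral UNIV (\<lambda>x. \<rho> x * \<bar>u t x\<bar>) - integral UNIV (\<lambda>x. \<rho> x * \<bar>u s x\<bar>) = integral {s..t} I"
    by simp
qed

section \<open>The weighted \<open>L\<^sup>1\<close> distance\<close>

lemma borel_measurable_ennreal_continuous:
  fixes f :: "'a::euclidean_space \<Rightarrow> real"
  shows "continuous_on UNIV f \<Longrightarrow> (\<lambda>x. ennreal (f x)) \<in> borel_measurable lborel"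
  by (metis borel_measurable_continuous_onI continuous_on_ennreal measurable_lborel2)

lemma nn_integral_eq_integral_UNIV:
  fixes f :: "'a::euclidean_space \<Rightarrow> real"
  assumes "f integrable_on UNIV" "\<And>x. 0 \<le> f x"
  shows "(\<integral>\<^sup>+ x. ennreal (f x) \<partial>lborel) = ennreal (integral UNIV f)"
  using nn_integral_has_integral_lebesgue[of UNIV f "integral UNIV f"] assms
  by (simp add: integrable_integral)

lemma ennreal_integral_le_set_nn_integral:
  fixes f :: "'a::euclidean_space \<Rightarrow> real"
  assumes "f absolutely_integrable_on S"
  shows "ennreal (integral S f) \<le> (\<integral>\<^sup>+ x\<in>S. ennreal (f x) \<partial>lborel)"
proof -
  have max_int: "(\<lambda>x. max (f x) 0) absolutely_integrable_on S"
    using absolutely_integrable_max_1[OF assms absolutely_integrable_zero] by simp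
  then have "integral S f \<le> integral S (\<lambda>x. max (f x) 0)"
    using assms by (intro integral_le) (auto simp: absolutely_integrable_on_def)
  then have "ennreal (integral S f) \<le> ennreal (integral S (\<lambda>x. max (f x) 0))"
    by (rule ennreal_leI)
  also have "\<dots> = (\<integral>\<^sup>+ x. ennreal (indicator S x * max (f x) 0) \<partial>lborel)"
    by (rule nn_integral_has_integral_lebesgue[symmetric])
      (use max_int in \<open>auto simp: absolutely_integrable_on_def integrable_integral\<close>)
  also have "\<dots> = (\<integral>\<^sup>+ x\<in>S. ennreal (f x) \<partial>lborel)"
    by (intro nn_integral_cong) (simp add: indicator_def max.commute ennreal_max_0)
  finally show ?thesis .
qed

lemma ennreal_add_le_add: "0 \<le> a \<Longrightarrow> ennreal (a + b) \<le> ennreal a + ennreal b"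
  by (cases "0 \<le> b") (auto simp: ennreal_plus intro: order_trans[OF ennreal_leI[of "a + b" a]] add_increasing2)

lemma borel_measurable_nn_integral_slice:
  fixes F :: "real \<Rightarrow> 'a::euclidean_space \<Rightarrow> real"
  assumes "continuous_on ({a..b} \<times> UNIV) (\<lambda>(t, x). F t x)"
  shows "(\<lambda>t. (\<integral>\<^sup>+ x. ennreal (F t x) \<partial>lborel) * indicator {a..b} t) \<in> borel_measurable lborel"
proof -
  have "(\<lambda>p. indicator ({a..b} \<times> UNIV) p *\<^sub>R (\<lambda>(t, x). F t x) p) \<in> borel_measurable borel"
    by (rule borel_measurable_continuous_on_indicator[OF _ assms]) (auto intro!: borel_closed closed_Times)
  then have "(\<lambda>p. ennreal (indicator ({a..b} \<times> UNIV) p * F (fst p) (snd p))) \<in> borel_measurable (lborel \<Otimes>\<^sub>M lborel)"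
    unfolding lborel_prod by (simp add: measurable_lborel1 case_prod_unfold)
  then have "(\<lambda>t. \<integral>\<^sup>+ x. ennreal (indicator ({a..b} \<times> UNIV) (t, x) * F t x) \<partial>lborel) \<in> borel_measurable lborel"
    by (intro lborel.borel_measurable_nn_integral) (simp add: case_prod_unfold)
  moreover have "(\<integral>\<^sup>+ x. ennreal (indicator ({a..b} \<times> UNIV) (t, x) * F t x) \<partial>lborel)
      = (\<integral>\<^sup>+ x. ennreal (F t x) \<partial>lborel) * indicator {a..b} t" for t
    by (cases "t \<in> {a..b}") (auto simp: indicator_def)
  ultimately show ?thesis by simp
qed

lemma continuous_eq_0_if_nn_integral_eq_0:
  fixes h :: "'a::euclidean_space \<Rightarrow> real"
  assumes "continuous_on UNIV h" "\<And>x. 0 \<le> h x" "(\<integral>\<^sup>+ x. ennreal (h x) \<partial>lborel) = 0"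
  shows "h x = 0"
proof -
  have "AE x in lborel. ennreal (h x) = 0"
    using nn_integral_0_iff_AE[OF borel_measurable_ennreal_continuous[OF assms(1)]] assms(3) by simp
  then have "AE x in lebesgue. x \<in> {x. h x = 0}"
    using assms(2) by (auto intro: AE_completion elim!: eventually_mono)
  moreover have "closed {x. h x = 0}"
    using assms(1) by (intro closed_Collect_eq continuous_on_const)
  ultimately show ?thesis using mem_closed_if_AE_lebesgue by blast
qed

definition cutoff_L1pi_dist :: "('a::euclidean_space \<Rightarrow> real) \<Rightarrow> real \<Rightarrow> ('a \<Rightarrow> real) \<Rightarrow> ('a \<Rightarrow> real) \<Rightarrow> real" where
  "cutoff_L1pi_dist V R f g = integral UNIV (\<lambda>x. cutoff R x * exp (- V x) * \<bar>f x - g x\<bar>)"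

lemma cutoff_L1pi_dist_nonneg: "0 \<le> cutoff_L1pi_dist V R f g"
  unfolding cutoff_L1pi_dist_def
  by (cases "(\<lambda>x. cutoff R x * exp (- V x) * \<bar>f x - g x\<bar>) integrable_on UNIV")
    (auto intro: integral_nonneg simp: cutoff_nonneg not_integrable_integral)

lemma continuous_on_cutoff_weight:
  "continuous_on UNIV V \<Longrightarrow> continuous_on UNIV f \<Longrightarrow> continuous_on UNIV g \<Longrightarrow>
    continuous_on UNIV (\<lambda>x. cutoff R x * exp (- V x) * \<bar>f x - g x\<bar>)"
  by (intro continuous_intros continuous_on_cutoff)

lemma nn_integral_cutoff_eq_cutoff_L1pi_dist:
  assumes "continuous_on UNIV V" "continuous_on UNIV f" "continuous_on UNIV g" "0 < R"
  shows "(\<integral>\<^sup>+ x. ennreal (cutoff R x * exp (- V x) * \<bar>f x - g x\<bar>) \<partial>lborel)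
    = ennreal (cutoff_L1pi_dist V R f g)"
  unfolding cutoff_L1pi_dist_def
  using continuous_on_cutoff_weight[OF assms(1-3)] cutoff_eq_0[OF assms(4)] cutoff_nonneg
  by (intro nn_integral_eq_integral_UNIV integrable_bounded_support[of _ R]) (auto intro!: mult_nonneg_nonneg)

lemma cutoff_L1pi_dist_le_L1pi_dist:
  assumes "continuous_on UNIV V" "continuous_on UNIV f" "continuous_on UNIV g" "0 < R"
  shows "ennreal (cutoff_L1pi_dist V R f g) \<le> L1pi_dist V f g"
  unfolding nn_integral_cutoff_eq_cutoff_L1pi_dist[OF assms, symmetric] L1pi_dist_def
proof (rule nn_integral_mono)
  fix x
  have "cutoff R x * (exp (- V x) * \<bar>f x - g x\<bar>) \<le> 1 * (exp (- V x) * \<bar>f x - g x\<bar>)"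
    by (intro mult_right_mono cutoff_le_1) auto
  then show "ennreal (cutoff R x * exp (- V x) * \<bar>f x - g x\<bar>) \<le> ennreal (\<bar>f x - g x\<bar> * exp (- V x))"
    by (intro ennreal_leI) (simp add: algebra_simps)
qed

lemma cutoff_L1pi_dist_tendsto:
  assumes "continuous_on UNIV V" "continuous_on UNIV f" "continuous_on UNIV g"
  shows "(\<lambda>n. ennreal (cutoff_L1pi_dist V (real (Suc n)) f g)) \<longlonglongrightarrow> L1pi_dist V f g"
proof -
  define F where "F n x = ennreal (cutoff (real (Suc n)) x * exp (- V x) * \<bar>f x - g x\<bar>)" for n x
  have "incseq F"
    unfolding incseq_def le_fun_def F_def
    by (intro allI impI ennreal_leI mult_right_mono cutoff_mono) auto
  moreover have "F n \<in> borel_measurable lborel" for n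
    unfolding F_def by (intro borel_measurable_ennreal_continuous continuous_on_cutoff_weight assms)
  moreover have "(\<lambda>n. F n x) \<longlonglongrightarrow> ennreal (\<bar>f x - g x\<bar> * exp (- V x))" for x
  proof -
    have "(\<lambda>n. cutoff (real (Suc n)) x * exp (- V x) * \<bar>f x - g x\<bar>) \<longlonglongrightarrow> 1 * exp (- V x) * \<bar>f x - g x\<bar>"
      by (intro tendsto_intros cutoff_tendsto_1)
    then show ?thesis unfolding F_def by (intro tendsto_ennrealI) (simp add: mult.commute)
  qed
  ultimately have "(\<lambda>n. integral\<^sup>N lborel (F n)) \<longlonglongrightarrow> L1pi_dist V f g"
    unfolding L1pi_dist_def by (rule nn_integral_LIMSEQ)
  moreover have "integral\<^sup>N lborel (F n) = ennreal (cutoff_L1pi_dist V (real (Suc n)) f g)" for n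
    unfolding F_def by (rule nn_integral_cutoff_eq_cutoff_L1pi_dist[OF assms]) simp
  ultimately show ?thesis by simp
qed

section \<open>Classical solutions\<close>

lemma
  assumes "classical_solution V \<beta> T \<mu>"
  shows classical_solution_nonneg: "t \<in> {0..T} \<Longrightarrow> 0 \<le> \<mu> t x"
    and classical_solution_continuous: "continuous_on ({0..T} \<times> UNIV) (\<lambda>(t, x). \<mu> t x)"
    and classical_solution_Ck2: "t \<in> {0..T} \<Longrightarrow> Ck 2 (\<lambda>y. \<mu> t y powr (\<beta> + 1))"
    and classical_solution_time_deriv: "t \<in> {0..T} \<Longrightarrow>
      ((\<lambda>s. \<mu> s x) has_real_derivative genL V (\<lambda>y. \<mu> t y powr (\<beta> + 1)) x) (at t within {0..T})"
  using assms by (simp_all add: classical_solution_def)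

lemma continuous_on_compose_snd: "continuous_on UNIV f \<Longrightarrow> continuous_on S (\<lambda>p. f (snd p))"
  by (rule continuous_on_compose2[OF _ continuous_on_snd]) auto

lemma classical_solution_grad_continuous:
  assumes "classical_solution V \<beta> T \<mu>"
  shows "continuous_on ({0..T} \<times> UNIV) (\<lambda>(t, x). grad (\<lambda>y. \<mu> t y powr (\<beta> + 1)) x)"
  using assms unfolding classical_solution_def grad_def case_prod_unfold
  by (intro continuous_intros) auto

lemma classical_solution_genL_continuous:
  assumes "classical_solution V \<beta> T \<mu>" "Ck 2 V"
  shows "continuous_on ({0..T} \<times> UNIV) (\<lambda>(t, x). genL V (\<lambda>y. \<mu> t y powr (\<beta> + 1)) x)"
  using assms(1) classical_solution_grad_continuous[OF assms(1)]
    continuous_on_compose_snd[OF continuous_on_grad[OF assms(2)]]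
  unfolding classical_solution_def genL_def laplacian_def case_prod_unfold
  by (intro continuous_intros) auto

lemma sgn_diff_powr:
  fixes a b m :: real
  assumes "0 \<le> a" "0 \<le> b" "0 < m"
  shows "sgn (a - b) = sgn (a powr m - b powr m)"
  using assms powr_less_mono2[of m a b] powr_less_mono2[of m b a]
  by (cases a b rule: linorder_cases) auto

definition dirichlet_energy :: "('a::euclidean_space \<Rightarrow> real) \<Rightarrow> real \<Rightarrow> (real \<Rightarrow> 'a \<Rightarrow> real) \<Rightarrow> ennreal" where
  "dirichlet_energy V T F =
    (\<integral>\<^sup>+ t\<in>{0..T}. (\<integral>\<^sup>+ x. ennreal ((norm (grad (F t) x))\<^sup>2 * exp (- V x)) \<partial>lborel) \<partial>lborel)"

lemma norm_diff_le_1_plus_squares: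
  fixes a b :: "'a::real_normed_vector"
  shows "norm (a - b) \<le> 1 + 2 * (norm a)\<^sup>2 + 2 * (norm b)\<^sup>2"
proof -
  have "0 \<le> (norm a + norm b - 1/2)\<^sup>2" "0 \<le> (norm a - norm b)\<^sup>2" by simp_all
  then have "norm a + norm b \<le> 1 + 2 * (norm a)\<^sup>2 + 2 * (norm b)\<^sup>2"
    by (simp add: power2_eq_square algebra_simps)
  with norm_triangle_ineq4[of a b] show ?thesis by linarith
qed

lemma ennreal_mult_add_double:
  fixes c p a b :: real
  assumes "0 \<le> c" "0 \<le> p" "0 \<le> a" "0 \<le> b"
  shows "ennreal (c * (p + 2 * a + 2 * b)) = ennreal c * (ennreal p + 2 * ennreal a + 2 * ennreal b)"
proof -
  have "ennreal (p + 2 * a + 2 * b) = ennreal p + 2 * ennreal a + 2 * ennreal b"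
    using assms by (simp add: ennreal_plus ennreal_mult)
  moreover have "ennreal (c * (p + 2 * a + 2 * b)) = ennreal c * ennreal (p + 2 * a + 2 * b)"
    using assms by (intro ennreal_mult) auto
  ultimately show ?thesis by simp
qed

lemma cutoff_energy_bound:
  fixes V f1 f2 :: "'a::euclidean_space \<Rightarrow> real"
  assumes V: "continuous_on UNIV V" and \<pi>: "(\<integral>\<^sup>+ x. ennreal (exp (- V x)) \<partial>lborel) = 1"
    and f1: "Ck 2 f1" and f2: "Ck 2 f2" and R: "0 < R"
  shows "ennreal (integral UNIV (\<lambda>x. norm (cutoff_grad R x) * norm (grad f1 x - grad f2 x) * exp (- V x)))
    \<le> ennreal (4 / R) * (1 + 2 * (\<integral>\<^sup>+ x. ennreal ((norm (grad f1 x))\<^sup>2 * exp (- V x)) \<partial>lborel)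
                          + 2 * (\<integral>\<^sup>+ x. ennreal ((norm (grad f2 x))\<^sup>2 * exp (- V x)) \<partial>lborel))"
proof -
  define P where "P x = norm (cutoff_grad R x) * norm (grad f1 x - grad f2 x) * exp (- V x)" for x
  define A where "A x = (norm (grad f1 x))\<^sup>2 * exp (- V x)" for x
  define B where "B x = (norm (grad f2 x))\<^sup>2 * exp (- V x)" for x
  have "P integrable_on UNIV"
    unfolding P_def using continuous_on_cutoff_grad continuous_on_grad[OF f1] continuous_on_grad[OF f2] V
      cutoff_grad_eq_0[OF R]
    by (intro integrable_bounded_support[of _ R] continuous_intros) auto
  then have "ennreal (integral UNIV P) = (\<integral>\<^sup>+ x. ennreal (P x) \<partial>lborel)"
    by (rule nn_integral_eq_integral_UNIV[symmetric]) (simp add: P_def)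
  also have "\<dots> \<le> (\<integral>\<^sup>+ x. ennreal (4 / R) * (ennreal (exp (- V x)) + 2 * ennreal (A x) + 2 * ennreal (B x)) \<partial>lborel)"
  proof (rule nn_integral_mono)
    fix x
    have "P x \<le> 4 / R * (1 + 2 * (norm (grad f1 x))\<^sup>2 + 2 * (norm (grad f2 x))\<^sup>2) * exp (- V x)"
      unfolding P_def using R
      by (intro mult_right_mono mult_mono norm_cutoff_grad_le norm_diff_le_1_plus_squares) auto
    also have "\<dots> = 4 / R * (exp (- V x) + 2 * A x + 2 * B x)"
      by (simp add: A_def B_def algebra_simps)
    finally have "ennreal (P x) \<le> ennreal (4 / R * (exp (- V x) + 2 * A x + 2 * B x))"
      by (rule ennreal_leI)
    also have "\<dots> = ennreal (4 / R) * (ennreal (exp (- V x)) + 2 * ennreal (A x) + 2 * ennreal (B x))"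
      using R by (intro ennreal_mult_add_double) (auto simp: A_def B_def)
    finally show "ennreal (P x) \<le> \<dots>" .
  qed
  also have "\<dots> = ennreal (4 / R) * ((\<integral>\<^sup>+ x. ennreal (exp (- V x)) \<partial>lborel)
      + 2 * (\<integral>\<^sup>+ x. ennreal (A x) \<partial>lborel) + 2 * (\<integral>\<^sup>+ x. ennreal (B x) \<partial>lborel))"
  proof -
    have "(\<lambda>x. ennreal (exp (- V x))) \<in> borel_measurable lborel"
      by (intro borel_measurable_ennreal_continuous continuous_intros V)
    moreover have "(\<lambda>x. ennreal (A x)) \<in> borel_measurable lborel"
      unfolding A_def by (intro borel_measurable_ennreal_continuous continuous_intros V continuous_on_grad f1)
    moreover have "(\<lambda>x. ennreal (B x)) \<in> borel_measurable lborel"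
      unfolding B_def by (intro borel_measurable_ennreal_continuous continuous_intros V continuous_on_grad f2)
    ultimately show ?thesis by (simp add: nn_integral_cmult nn_integral_add)
  qed
  finally show ?thesis using \<pi> by (simp add: P_def[abs_def] A_def B_def)
qed

lemma kato_cutoff_bound:
  fixes V f1 f2 :: "'a::euclidean_space \<Rightarrow> real"
  assumes V: "Ck 2 V" and \<pi>: "(\<integral>\<^sup>+ x. ennreal (exp (- V x)) \<partial>lborel) = 1"
    and f1: "Ck 2 f1" and f2: "Ck 2 f2" and R: "0 < R"
  shows "ennreal (integral UNIV (\<lambda>x. sgn (f1 x - f2 x) * (cutoff R x * exp (- V x) * (genL V f1 x - genL V f2 x))))
    \<le> ennreal (4 / R) * (1 + 2 * (\<integral>\<^sup>+ x. ennreal ((norm (grad f1 x))\<^sup>2 * exp (- V x)) \<partial>lborel)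
                          + 2 * (\<integral>\<^sup>+ x. ennreal ((norm (grad f2 x))\<^sup>2 * exp (- V x)) \<partial>lborel))"
proof -
  have "integral UNIV (\<lambda>x. sgn (f1 x - f2 x) * (cutoff R x * exp (- V x) * (genL V f1 x - genL V f2 x)))
      \<le> integral UNIV (\<lambda>x. norm (cutoff_grad R x) * norm (grad (\<lambda>x. f1 x - f2 x) x) * exp (- V x))"
    using kato_inequality[OF Ck_diff[OF f1 f2] V has_derivative_cutoff continuous_on_cutoff_grad
        cutoff_nonneg cutoff_eq_0[OF R]]
    by (simp add: genL_diff[OF f1 f2])
  also have "\<dots> = integral UNIV (\<lambda>x. norm (cutoff_grad R x) * norm (grad f1 x - grad f2 x) * exp (- V x))"
    by (simp add: grad_diff Ck2_differentiable[OF f1] Ck2_differentiable[OF f2])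
  finally show ?thesis
    using order_trans[OF ennreal_leI cutoff_energy_bound[OF Ck2_continuous[OF V] \<pi> f1 f2 R]] by blast
qed

lemma cutoff_L1pi_dist_evolution:
  fixes V :: "'a::euclidean_space \<Rightarrow> real" and \<mu>1 \<mu>2 :: "real \<Rightarrow> 'a \<Rightarrow> real"
  assumes V: "Ck 2 V" and \<mu>1: "classical_solution V \<beta> T \<mu>1" and \<mu>2: "classical_solution V \<beta> T \<mu>2"
    and R: "0 < R" and st: "0 \<le> s" "s \<le> t" "t \<le> T"
  defines "I \<equiv> \<lambda>\<tau>. integral UNIV (\<lambda>x. sgn (\<mu>1 \<tau> x - \<mu>2 \<tau> x) * (cutoff R x * exp (- V x)
      * (genL V (\<lambda>y. \<mu>1 \<tau> y powr (\<beta> + 1)) x - genL V (\<lambda>y. \<mu>2 \<tau> y powr (\<beta> + 1)) x)))"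
  shows "I absolutely_integrable_on {s..t}"
    and "cutoff_L1pi_dist V R (\<mu>1 t) (\<mu>2 t) - cutoff_L1pi_dist V R (\<mu>1 s) (\<mu>2 s) = integral {s..t} I"
proof -
  have sub: "{s..t} \<subseteq> {0..T}" using st by auto
  have restrict: "continuous_on ({s..t} \<times> UNIV) F" if "continuous_on ({0..T} \<times> UNIV) F"
    for F :: "real \<times> 'a \<Rightarrow> real"
    by (rule continuous_on_subset[OF that]) (use sub in auto)
  have u_cont: "continuous_on ({s..t} \<times> UNIV) (\<lambda>(\<tau>, x). \<mu>1 \<tau> x - \<mu>2 \<tau> x)"
    using restrict[OF classical_solution_continuous[OF \<mu>1]] restrict[OF classical_solution_continuous[OF \<mu>2]]
    unfolding case_prod_unfold by (intro continuous_intros)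
  have g_cont: "continuous_on ({s..t} \<times> UNIV)
      (\<lambda>(\<tau>, x). genL V (\<lambda>y. \<mu>1 \<tau> y powr (\<beta> + 1)) x - genL V (\<lambda>y. \<mu>2 \<tau> y powr (\<beta> + 1)) x)"
    using restrict[OF classical_solution_genL_continuous[OF \<mu>1 V]]
      restrict[OF classical_solution_genL_continuous[OF \<mu>2 V]]
    unfolding case_prod_unfold by (intro continuous_intros)
  have u_deriv: "((\<lambda>\<tau>. \<mu>1 \<tau> x - \<mu>2 \<tau> x) has_real_derivative
      genL V (\<lambda>y. \<mu>1 \<tau> y powr (\<beta> + 1)) x - genL V (\<lambda>y. \<mu>2 \<tau> y powr (\<beta> + 1)) x) (at \<tau> within {s..t})"
    if "\<tau> \<in> {s..t}" for \<tau> x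
    using that sub
    by (intro DERIV_diff DERIV_subset[OF classical_solution_time_deriv[OF \<mu>1]]
        DERIV_subset[OF classical_solution_time_deriv[OF \<mu>2]]) auto
  have \<rho>_cont: "continuous_on UNIV (\<lambda>x. cutoff R x * exp (- V x))"
    using Ck2_continuous[OF V] by (intro continuous_intros continuous_on_cutoff)
  have \<rho>_supp: "cutoff R x * exp (- V x) = 0" if "R < norm x" for x
    using cutoff_eq_0[OF R that] by simp
  from weighted_abs_evolution[OF st(2) u_cont g_cont u_deriv \<rho>_cont \<rho>_supp]
  show "I absolutely_integrable_on {s..t}"
    "cutoff_L1pi_dist V R (\<mu>1 t) (\<mu>2 t) - cutoff_L1pi_dist V R (\<mu>1 s) (\<mu>2 s) = integral {s..t} I"
    unfolding I_def cutoff_L1pi_dist_def by simp_all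
qed

lemma borel_measurable_energy_density:
  assumes "classical_solution V \<beta> T \<mu>" "Ck 2 V"
  shows "(\<lambda>\<tau>. (\<integral>\<^sup>+ x. ennreal ((norm (grad (\<lambda>y. \<mu> \<tau> y powr (\<beta> + 1)) x))\<^sup>2 * exp (- V x)) \<partial>lborel)
      * indicator {0..T} \<tau>) \<in> borel_measurable lborel"
  using classical_solution_grad_continuous[OF assms(1)] continuous_on_compose_snd[OF Ck2_continuous[OF assms(2)]]
  by (intro borel_measurable_nn_integral_slice) (auto simp: case_prod_unfold intro!: continuous_intros)

(* Since powr is strictly increasing, sgn (mu1 - mu2) = sgn (mu1^(beta+1) - mu2^(beta+1)),
   so Kato's inequality applies to the time derivative of the cutoff distance. *)
lemma cutoff_L1pi_dist_growth:
  fixes V :: "'a::euclidean_space \<Rightarrow> real" and \<mu>1 \<mu>2 :: "real \<Rightarrow> 'a \<Rightarrow> real"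
  assumes \<beta>: "0 < \<beta>" and V: "Ck 2 V" and \<pi>: "(\<integral>\<^sup>+ x. ennreal (exp (- V x)) \<partial>lborel) = 1"
    and \<mu>1: "classical_solution V \<beta> T \<mu>1" and \<mu>2: "classical_solution V \<beta> T \<mu>2"
    and R: "0 < R" and st: "0 \<le> s" "s \<le> t" "t \<le> T"
  shows "ennreal (cutoff_L1pi_dist V R (\<mu>1 t) (\<mu>2 t))
    \<le> ennreal (cutoff_L1pi_dist V R (\<mu>1 s) (\<mu>2 s))
      + ennreal (4 / R) * (ennreal T + 2 * dirichlet_energy V T (\<lambda>t y. \<mu>1 t y powr (\<beta> + 1))
                                     + 2 * dirichlet_energy V T (\<lambda>t y. \<mu>2 t y powr (\<beta> + 1)))"
proof -
  define I where "I = (\<lambda>\<tau>. integral UNIV (\<lambda>x. sgn (\<mu>1 \<tau> x - \<mu>2 \<tau> x) * (cutoff R x * exp (- V x)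
      * (genL V (\<lambda>y. \<mu>1 \<tau> y powr (\<beta> + 1)) x - genL V (\<lambda>y. \<mu>2 \<tau> y powr (\<beta> + 1)) x))))"
  define E where "E \<mu> \<tau> = (\<integral>\<^sup>+ x. ennreal ((norm (grad (\<lambda>y. \<mu> \<tau> y powr (\<beta> + 1)) x))\<^sup>2 * exp (- V x)) \<partial>lborel)"
    for \<mu> :: "real \<Rightarrow> 'a \<Rightarrow> real" and \<tau>
  note evolution = cutoff_L1pi_dist_evolution[OF V \<mu>1 \<mu>2 R st, folded I_def]
  have I_le: "ennreal (I \<tau>) \<le> ennreal (4 / R) * (1 + 2 * E \<mu>1 \<tau> + 2 * E \<mu>2 \<tau>)" if "\<tau> \<in> {0..T}" for \<tau>
  proof -
    have "sgn (\<mu>1 \<tau> x - \<mu>2 \<tau> x) = sgn (\<mu>1 \<tau> x powr (\<beta> + 1) - \<mu>2 \<tau> x powr (\<beta> + 1))" for x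
      using \<beta> classical_solution_nonneg[OF \<mu>1 that] classical_solution_nonneg[OF \<mu>2 that]
      by (intro sgn_diff_powr) auto
    then show ?thesis
      unfolding I_def E_def
      using kato_cutoff_bound[OF V \<pi> classical_solution_Ck2[OF \<mu>1 that] classical_solution_Ck2[OF \<mu>2 that] R]
      by simp
  qed
  have "ennreal (integral {s..t} I) \<le> (\<integral>\<^sup>+ \<tau>\<in>{s..t}. ennreal (I \<tau>) \<partial>lborel)"
    by (rule ennreal_integral_le_set_nn_integral[OF evolution(1)])
  also have "\<dots> \<le> (\<integral>\<^sup>+ \<tau>. ennreal (4 / R) * (indicator {0..T} \<tau>
      + 2 * (E \<mu>1 \<tau> * indicator {0..T} \<tau>) + 2 * (E \<mu>2 \<tau> * indicator {0..T} \<tau>)) \<partial>lborel)"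
    by (intro nn_integral_mono) (use I_le st in \<open>auto split: split_indicator\<close>)
  also have "\<dots> = ennreal (4 / R) * (ennreal T + 2 * dirichlet_energy V T (\<lambda>t y. \<mu>1 t y powr (\<beta> + 1))
      + 2 * dirichlet_energy V T (\<lambda>t y. \<mu>2 t y powr (\<beta> + 1)))"
    using borel_measurable_energy_density[OF \<mu>1 V] borel_measurable_energy_density[OF \<mu>2 V] st
    by (simp add: nn_integral_cmult nn_integral_add dirichlet_energy_def E_def)
  finally have bound: "ennreal (integral {s..t} I) \<le> ennreal (4 / R) * (ennreal T
      + 2 * dirichlet_energy V T (\<lambda>t y. \<mu>1 t y powr (\<beta> + 1))
      + 2 * dirichlet_energy V T (\<lambda>t y. \<mu>2 t y powr (\<beta> + 1)))" .
  have "cutoff_L1pi_dist V R (\<mu>1 t) (\<mu>2 t) = cutoff_L1pi_dist V R (\<mu>1 s) (\<mu>2 s) + integral {s..t} I"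
    using evolution(2) by simp
  then have "ennreal (cutoff_L1pi_dist V R (\<mu>1 t) (\<mu>2 t))
      \<le> ennreal (cutoff_L1pi_dist V R (\<mu>1 s) (\<mu>2 s)) + ennreal (integral {s..t} I)"
    using ennreal_add_le_add[OF cutoff_L1pi_dist_nonneg] by simp
  with bound show ?thesis by (meson add_left_mono order_trans)
qed

lemma L1pi_dist_antimono:
  fixes V :: "'a::euclidean_space \<Rightarrow> real" and \<mu>1 \<mu>2 :: "real \<Rightarrow> 'a \<Rightarrow> real"
  assumes \<beta>: "0 < \<beta>" and V: "Ck 2 V" and \<pi>: "(\<integral>\<^sup>+ x. ennreal (exp (- V x)) \<partial>lborel) = 1"
    and \<mu>1: "classical_solution V \<beta> T \<mu>1" and \<mu>2: "classical_solution V \<beta> T \<mu>2"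
    and E1: "dirichlet_energy V T (\<lambda>t y. \<mu>1 t y powr (\<beta> + 1)) < \<infinity>"
    and E2: "dirichlet_energy V T (\<lambda>t y. \<mu>2 t y powr (\<beta> + 1)) < \<infinity>"
    and st: "0 \<le> s" "s \<le> t" "t \<le> T"
  shows "L1pi_dist V (\<mu>1 t) (\<mu>2 t) \<le> L1pi_dist V (\<mu>1 s) (\<mu>2 s)"
proof -
  have "ennreal T + 2 * dirichlet_energy V T (\<lambda>t y. \<mu>1 t y powr (\<beta> + 1))
      + 2 * dirichlet_energy V T (\<lambda>t y. \<mu>2 t y powr (\<beta> + 1)) < \<infinity>"
    using E1 E2 by (simp add: ennreal_mult_less_top)
  then obtain k where k: "ennreal T + 2 * dirichlet_energy V T (\<lambda>t y. \<mu>1 t y powr (\<beta> + 1))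
      + 2 * dirichlet_energy V T (\<lambda>t y. \<mu>2 t y powr (\<beta> + 1)) = ennreal k" "0 \<le> k"
    by (auto simp: less_top_ennreal)
  have cont: "continuous_on UNIV (\<mu>1 \<tau>)" "continuous_on UNIV (\<mu>2 \<tau>)" if "\<tau> \<in> {0..T}" for \<tau>
    using continuous_on_slice[OF classical_solution_continuous[OF \<mu>1] that]
      continuous_on_slice[OF classical_solution_continuous[OF \<mu>2] that] .
  note V_cont = Ck2_continuous[OF V]
  have s: "s \<in> {0..T}" and t: "t \<in> {0..T}" using st by auto
  have le: "ennreal (cutoff_L1pi_dist V (real (Suc n)) (\<mu>1 t) (\<mu>2 t))
      \<le> L1pi_dist V (\<mu>1 s) (\<mu>2 s) + ennreal (4 / real (Suc n) * k)" for n
  proof -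
    have "ennreal (cutoff_L1pi_dist V (real (Suc n)) (\<mu>1 t) (\<mu>2 t))
        \<le> ennreal (cutoff_L1pi_dist V (real (Suc n)) (\<mu>1 s) (\<mu>2 s)) + ennreal (4 / real (Suc n)) * ennreal k"
      using cutoff_L1pi_dist_growth[OF \<beta> V \<pi> \<mu>1 \<mu>2 _ st, of "real (Suc n)"] k(1) by simp
    also have "\<dots> = ennreal (cutoff_L1pi_dist V (real (Suc n)) (\<mu>1 s) (\<mu>2 s)) + ennreal (4 / real (Suc n) * k)"
      using k(2) by (subst ennreal_mult) auto
    also have "\<dots> \<le> L1pi_dist V (\<mu>1 s) (\<mu>2 s) + ennreal (4 / real (Suc n) * k)"
      by (rule add_right_mono[OF cutoff_L1pi_dist_le_L1pi_dist[OF V_cont cont[OF s]]]) simp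
    finally show ?thesis .
  qed
  have "(\<lambda>n. L1pi_dist V (\<mu>1 s) (\<mu>2 s) + ennreal (4 / real (Suc n) * k))
      \<longlonglongrightarrow> L1pi_dist V (\<mu>1 s) (\<mu>2 s) + ennreal (4 * 0 * k)"
    by (intro tendsto_intros) (use LIMSEQ_inverse_real_of_nat in \<open>simp add: divide_inverse\<close>)
  with cutoff_L1pi_dist_tendsto[OF V_cont cont[OF t]] show ?thesis
    using le by (auto intro: LIMSEQ_le)
qed

lemma eq_if_L1pi_dist_eq_0:
  assumes "continuous_on UNIV V" "continuous_on UNIV f" "continuous_on UNIV g" "L1pi_dist V f g = 0"
  shows "f x = g x"
proof -
  have "continuous_on UNIV (\<lambda>x. \<bar>f x - g x\<bar> * exp (- V x))"
    using assms(1-3) by (intro continuous_intros)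
  from continuous_eq_0_if_nn_integral_eq_0[OF this _ assms(4)[unfolded L1pi_dist_def]]
  show ?thesis by simp
qed

theorem proposition4:
  fixes V :: "'a::euclidean_space \<Rightarrow> real"
    and \<beta> T :: real
    and \<mu>1 \<mu>2 :: "real \<Rightarrow> 'a \<Rightarrow> real"
  assumes "\<beta> > 0" and "T > 0"
    and "smooth V"
    and "(\<integral>\<^sup>+ x. ennreal (exp (- V x)) \<partial>lborel) = 1"
    and "classical_solution V \<beta> T \<mu>1" and "classical_solution V \<beta> T \<mu>2"
    and "(\<integral>\<^sup>+ t\<in>{0..T}. (\<integral>\<^sup>+ x. ennreal ((norm (grad (\<lambda>y. \<mu>1 t y powr (\<beta> + 1)) x))\<^sup>2
            * exp (- V x)) \<partial>lborel) \<partial>lborel) < \<infinity>"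
    and "(\<integral>\<^sup>+ t\<in>{0..T}. (\<integral>\<^sup>+ x. ennreal ((norm (grad (\<lambda>y. \<mu>2 t y powr (\<beta> + 1)) x))\<^sup>2
            * exp (- V x)) \<partial>lborel) \<partial>lborel) < \<infinity>"
  shows "(\<forall>s\<in>{0..T}. \<forall>t\<in>{0..T}. s \<le> t \<longrightarrow>
            L1pi_dist V (\<mu>1 t) (\<mu>2 t) \<le> L1pi_dist V (\<mu>1 s) (\<mu>2 s))
         \<and> ((\<forall>x. \<mu>1 0 x = \<mu>2 0 x) \<longrightarrow> (\<forall>t\<in>{0..T}. \<forall>x. \<mu>1 t x = \<mu>2 t x))"
proof -
  have V: "Ck 2 V" using assms(3) by (simp add: smooth_def)
  note antimono = L1pi_dist_antimono[OF assms(1) V assms(4-6) assms(7-8)[folded dirichlet_energy_def]]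
  have "\<mu>1 t x = \<mu>2 t x" if initial: "\<forall>x. \<mu>1 0 x = \<mu>2 0 x" and t: "t \<in> {0..T}" for t x
  proof (rule eq_if_L1pi_dist_eq_0[of V "\<mu>1 t" "\<mu>2 t"])
    show "continuous_on UNIV V" "continuous_on UNIV (\<mu>1 t)" "continuous_on UNIV (\<mu>2 t)"
      using Ck2_continuous[OF V] continuous_on_slice[OF classical_solution_continuous[OF assms(5)] t]
        continuous_on_slice[OF classical_solution_continuous[OF assms(6)] t] .
    have "L1pi_dist V (\<mu>1 t) (\<mu>2 t) \<le> L1pi_dist V (\<mu>1 0) (\<mu>2 0)"
      using antimono[of 0 t] t by auto
    also have "\<dots> = 0" using initial by (simp add: L1pi_dist_def)
    finally show "L1pi_dist V (\<mu>1 t) (\<mu>2 t) = 0" by simp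
  qed
  then show ?thesis using antimono by auto
qed

end
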